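(* Let $\lambda,\tau_0\in S^{n-1}$ and $\tau_1\in\mathbb{R}^n$ with $\tau_0\perp\tau_1$, let $f_0>0$ and $t_0\in[0,L]$. If $\tau_0,\tau_1,\lambda$ are linearly independent, then the initial value problem \[ \tau''+|\tau'|^2\tau=\beta f^{-1}|\tau'|^2\,\mathrm{proj}^\perp_{\tau,\tau'}(\lambda),\quad f'=\beta\,\lambda\cdot\tau',\quad \tau(t_0)=\tau_0,\ \tau'(t_0)=\tau_1,\ f(t_0)=f_0 \] has a unique global solution $\tau\colon[0,L]\to S^{n-1}$, $f\colon[0,L]\to(0,\infty)$. For all $t\in[0,L]$ this solution satisfies $|\tau'(t)|=|\tau_1|$ and $\lambda\cdot\tau(t)\ne\pm1$, and $\tau(t)$ lies in the linear span of $\tau_0,\tau_1,\lambda$.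
   Context: $\beta\colon[0,L]\to(0,\infty)$ is a function of bounded variation, bounded and bounded away from $0$; solutions are understood in the sense of absolutely continuous (Carathéodory) solutions. $\mathrm{proj}^\perp_{V,W}$ is the orthogonal projection onto the orthogonal complement of the span of $V,W\in\mathbb{R}^n$. *)

theory Defs
  imports "HOL-Analysis.Analysis"
begin

definition bounded_variation_on :: "(real \<Rightarrow> real) \<Rightarrow> real \<Rightarrow> real \<Rightarrow> bool" where
  "bounded_variation_on g a b \<longleftrightarrow>
     (\<exists>M. \<forall>xs. sorted xs \<and> set xs \<subseteq> {a..b} \<longrightarrow>
        (\<Sum>i<length xs - 1. \<bar>g (xs ! Suc i) - g (xs ! i)\<bar>) \<le> M)"

definition proj_perp :: "'a::euclidean_space \<Rightarrow> 'a \<Rightarrow> 'a \<Rightarrow> 'a" where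
  "proj_perp V W x =
     (THE y. x - y \<in> span {V, W} \<and> (\<forall>z\<in>span {V, W}. orthogonal y z))"

text \<open>Absolutely continuous (Caratheodory) solution on [0,L] of
  tau'' + |tau'|^2 tau = beta f^{-1} |tau'|^2 proj_perp_{tau,tau'}(lam),  f' = beta lam . tau',
  tau(t0) = tau0, tau'(t0) = tau1, f(t0) = f0, with tau in the unit sphere and f > 0.
  tau is differentiable on [0,L] with derivative D, and D and f are given as
  indefinite Lebesgue integrals of the right-hand sides (i.e. they are absolutely
  continuous and satisfy the equations almost everywhere).\<close>
definition caratheodory_solution ::
  "(real \<Rightarrow> real) \<Rightarrow> 'a::euclidean_space \<Rightarrow> real \<Rightarrow> real \<Rightarrow> 'a \<Rightarrow> 'a \<Rightarrow> real
    \<Rightarrow> (real \<Rightarrow> 'a) \<Rightarrow> (real \<Rightarrow> real) \<Rightarrow> bool" where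
  "caratheodory_solution \<beta> lam L t0 \<tau>0 \<tau>1 f0 \<tau> f \<longleftrightarrow>
     (\<forall>t\<in>{0..L}. \<tau> differentiable (at t within {0..L})) \<and>
     (let D = (\<lambda>t. vector_derivative \<tau> (at t within {0..L}));
          G = (\<lambda>t. (\<beta> t * inverse (f t) * (norm (D t))\<^sup>2) *\<^sub>R proj_perp (\<tau> t) (D t) lam
                    - (norm (D t))\<^sup>2 *\<^sub>R \<tau> t);
          H = (\<lambda>t. \<beta> t * (lam \<bullet> D t))
      in G absolutely_integrable_on {0..L} \<and> H absolutely_integrable_on {0..L} \<and>
         (\<forall>s\<in>{0..L}. \<forall>t\<in>{0..L}. s \<le> t \<longrightarrow>
             (G has_integral (D t - D s)) {s..t} \<and> (H has_integral (f t - f s)) {s..t}) \<and>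
         \<tau> t0 = \<tau>0 \<and> D t0 = \<tau>1 \<and> f t0 = f0 \<and>
         (\<forall>t\<in>{0..L}. norm (\<tau> t) = 1 \<and> f t > 0))"

end

(* The right-hand side is singular where f = 0 and where tau, tau', lam become dependent, so the
   system for (tau, tau', f) is first replaced by a globally Lipschitz one: the arguments are retracted
   onto balls and f^-1 |tau'|^2 is replaced by c^2 f pi / k2, where c = |tau1|,
   pi = 1 - (lam . tau)^2 - (lam . tau')^2 / c^2 and k2 = f0^2 pi(t0) > 0 by linear independence.
   Picard iteration gives a unique global solution of the modified system. Gronwall-type arguments
   show that it keeps |tau| = 1, tau . tau' = 0, |tau'| = c and f^2 pi = k2, so it solves the original
   system; the last identity forces f > 0 and pi > 0, i.e. lam . tau <> +-1, and the component of tau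
   orthogonal to span {tau0, tau1, lam} solves a linear equation with zero data. Conversely, every
   Caratheodory solution has a bounded derivative and satisfies the same invariants, so it solves the
   modified system, which gives uniqueness. *)

theory Submission
  imports Defs
begin

section \<open>Bounded primitives\<close>

(* The Lipschitz functions among the absolutely continuous ones; all solutions are sought in this class. *)
definition bounded_primitive :: "real \<Rightarrow> (real \<Rightarrow> 'v::euclidean_space) \<Rightarrow> (real \<Rightarrow> 'v) \<Rightarrow> bool" where
  "bounded_primitive L u u' \<longleftrightarrow>
     (\<forall>s t. 0 \<le> s \<longrightarrow> s \<le> t \<longrightarrow> t \<le> L \<longrightarrow> (u' has_integral (u t - u s)) {s..t}) \<and>
     u' \<in> borel_measurable (lebesgue_on {0..L}) \<and> (\<exists>B. \<forall>t\<in>{0..L}. norm (u' t) \<le> B)"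

lemma bounded_primitiveI:
  assumes "\<And>s t. 0 \<le> s \<Longrightarrow> s \<le> t \<Longrightarrow> t \<le> L \<Longrightarrow> (u' has_integral (u t - u s)) {s..t}"
    and "u' \<in> borel_measurable (lebesgue_on {0..L})" and "\<And>t. t \<in> {0..L} \<Longrightarrow> norm (u' t) \<le> B"
  shows "bounded_primitive L u u'"
  using assms unfolding bounded_primitive_def by blast

lemma bounded_primitive_has_integral:
  "bounded_primitive L u u' \<Longrightarrow> 0 \<le> s \<Longrightarrow> s \<le> t \<Longrightarrow> t \<le> L \<Longrightarrow> (u' has_integral (u t - u s)) {s..t}"
  unfolding bounded_primitive_def by blast

lemma bounded_primitive_measurable:
  "bounded_primitive L u u' \<Longrightarrow> u' \<in> borel_measurable (lebesgue_on {0..L})"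
  unfolding bounded_primitive_def by blast

lemma bounded_primitive_boundE:
  assumes "bounded_primitive L u u'"
  obtains B where "B \<ge> 0" "\<And>t. t \<in> {0..L} \<Longrightarrow> norm (u' t) \<le> B"
proof -
  obtain B where "\<forall>t\<in>{0..L}. norm (u' t) \<le> B" using assms unfolding bounded_primitive_def by blast
  then show ?thesis using that[of "max B 0"] by (auto simp: le_max_iff_disj)
qed

lemma bounded_measurable_integrable_on:
  fixes g :: "real \<Rightarrow> 'v::euclidean_space"
  assumes "g \<in> borel_measurable (lebesgue_on {0..L})" "\<And>t. t \<in> {0..L} \<Longrightarrow> norm (g t) \<le> B"
    and "0 \<le> s" "s \<le> t" "t \<le> L"
  shows "g integrable_on {s..t}"
proof -
  have "g absolutely_integrable_on {0..L}"
    by (rule measurable_bounded_by_integrable_imp_absolutely_integrable[where g="\<lambda>_. B"])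
       (use assms in auto)
  then have "g integrable_on {0..L}" by (simp add: absolutely_integrable_on_def)
  then show ?thesis by (rule integrable_on_subinterval) (use assms in auto)
qed

lemma bounded_primitive_norm_diff_le:
  assumes u: "bounded_primitive L u u'" and "s \<in> {0..L}" "t \<in> {0..L}"
    and bound: "\<And>r. r \<in> closed_segment s t \<Longrightarrow> norm (u' r) \<le> B"
  shows "norm (u t - u s) \<le> B * \<bar>t - s\<bar>"
proof -
  have "norm (u b - u a) \<le> B * (b - a)"
    if ab: "a \<in> {0..L}" "b \<in> {0..L}" "a \<le> b" "closed_segment s t = {a..b}" for a b
  proof -
    have "a \<in> closed_segment s t" unfolding ab(4) using ab(3) by simp
    then have "B \<ge> 0" using bound by (meson norm_ge_zero order_trans)
    then have "norm (u b - u a) \<le> B * Henstock_Kurzweil_Integration.content (cbox a b)"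
      by (rule has_integral_bound) (use bounded_primitive_has_integral[OF u] bound ab in auto)
    then show ?thesis using ab by simp
  qed
  from this[of s t] this[of t s] assms(2,3) show ?thesis
    by (cases "s \<le> t") (auto simp: closed_segment_eq_real_ivl norm_minus_commute)
qed

lemma bounded_primitive_norm_diff_le_uniform:
  assumes "bounded_primitive L u u'" "\<And>r. r \<in> {0..L} \<Longrightarrow> norm (u' r) \<le> B" "s \<in> {0..L}" "t \<in> {0..L}"
  shows "norm (u t - u s) \<le> B * \<bar>t - s\<bar>"
  by (rule bounded_primitive_norm_diff_le[OF assms(1,3,4)])
     (use assms(2-4) in \<open>auto simp: closed_segment_eq_real_ivl split: if_splits\<close>)

lemma bounded_primitive_const_if_deriv_zero:
  assumes "bounded_primitive L u (\<lambda>t. 0)" "s \<in> {0..L}" "t \<in> {0..L}"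
  shows "u t = u s"
  using bounded_primitive_norm_diff_le_uniform[OF assms(1) _ assms(2,3), of 0] by simp

lemma bounded_primitive_continuous_on:
  assumes "bounded_primitive L u u'"
  shows "continuous_on {0..L} u"
proof -
  obtain B where B: "B \<ge> 0" "\<And>t. t \<in> {0..L} \<Longrightarrow> norm (u' t) \<le> B"
    using bounded_primitive_boundE[OF assms] by blast
  have "norm (u t - u s) \<le> B * \<bar>t - s\<bar>" if "s \<in> {0..L}" "t \<in> {0..L}" for s t
    using bounded_primitive_norm_diff_le_uniform[OF assms B(2) that] .
  then have "B-lipschitz_on {0..L} u"
    by (intro lipschitz_onI) (use B in \<open>auto simp: dist_norm dist_real_def\<close>)
  then show ?thesis by (rule lipschitz_on_continuous_on)
qed

lemma bounded_primitive_linear: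
  fixes f :: "'a::euclidean_space \<Rightarrow> 'b::euclidean_space"
  assumes f: "bounded_linear f" and u: "bounded_primitive L u u'"
  shows "bounded_primitive L (\<lambda>t. f (u t)) (\<lambda>t. f (u' t))"
proof -
  interpret bounded_linear f by fact
  obtain K where K: "\<And>x. norm (f x) \<le> norm x * K" "K \<ge> 0" using nonneg_bounded by blast
  obtain B where B: "\<And>t. t \<in> {0..L} \<Longrightarrow> norm (u' t) \<le> B" using bounded_primitive_boundE[OF u] by blast
  show ?thesis
  proof (rule bounded_primitiveI)
    show "((\<lambda>t. f (u' t)) has_integral (f (u t) - f (u s))) {s..t}" if "0 \<le> s" "s \<le> t" "t \<le> L" for s t
      using has_integral_linear[OF bounded_primitive_has_integral[OF u that] f] by (simp add: o_def diff)
    show "(\<lambda>t. f (u' t)) \<in> borel_measurable (lebesgue_on {0..L})"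
      using measurable_compose[OF bounded_primitive_measurable[OF u] borel_measurable_continuous_onI[OF linear_continuous_on[OF f]]]
      by (simp add: o_def)
    show "norm (f (u' t)) \<le> B * K" if "t \<in> {0..L}" for t
      using B[OF that] K by (meson mult_right_mono order_trans)
  qed
qed

lemma bounded_primitive_add:
  assumes u: "bounded_primitive L u u'" and v: "bounded_primitive L v v'"
  shows "bounded_primitive L (\<lambda>t. u t + v t) (\<lambda>t. u' t + v' t)"
proof -
  obtain B where B: "\<And>t. t \<in> {0..L} \<Longrightarrow> norm (u' t) \<le> B" using bounded_primitive_boundE[OF u] by blast
  obtain C where C: "\<And>t. t \<in> {0..L} \<Longrightarrow> norm (v' t) \<le> C" using bounded_primitive_boundE[OF v] by blast
  show ?thesis
  proof (rule bounded_primitiveI)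
    show "((\<lambda>t. u' t + v' t) has_integral (u t + v t - (u s + v s))) {s..t}" if "0 \<le> s" "s \<le> t" "t \<le> L" for s t
      using has_integral_add[OF bounded_primitive_has_integral[OF u that] bounded_primitive_has_integral[OF v that]]
      by (simp add: algebra_simps)
    show "(\<lambda>t. u' t + v' t) \<in> borel_measurable (lebesgue_on {0..L})"
      using bounded_primitive_measurable[OF u] bounded_primitive_measurable[OF v] by measurable
    show "norm (u' t + v' t) \<le> B + C" if "t \<in> {0..L}" for t
      using B[OF that] C[OF that] by (meson add_mono norm_triangle_ineq order_trans)
  qed
qed

lemma bounded_primitive_const: "bounded_primitive L (\<lambda>t. c) (\<lambda>t. 0)"
  by (rule bounded_primitiveI[where B=0]) auto

lemma bounded_primitive_diff:
  fixes u :: "real \<Rightarrow> 'a::euclidean_space"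
  assumes "bounded_primitive L u u'" "bounded_primitive L v v'"
  shows "bounded_primitive L (\<lambda>t. u t - v t) (\<lambda>t. u' t - v' t)"
  using bounded_primitive_add[OF assms(1) bounded_primitive_linear[OF bounded_linear_scaleR_right assms(2), of "-1"]]
  by simp

lemma bounded_primitive_cong:
  assumes u: "bounded_primitive L u u'"
    and "\<And>t. t \<in> {0..L} \<Longrightarrow> u t = v t" "\<And>t. t \<in> {0..L} \<Longrightarrow> u' t = v' t"
  shows "bounded_primitive L v v'"
proof -
  obtain B where B: "\<And>t. t \<in> {0..L} \<Longrightarrow> norm (u' t) \<le> B" using bounded_primitive_boundE[OF u] by blast
  show ?thesis
  proof (rule bounded_primitiveI)
    show "(v' has_integral (v t - v s)) {s..t}" if st: "0 \<le> s" "s \<le> t" "t \<le> L" for s t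
      using bounded_primitive_has_integral[OF u st] assms(2)[of s] assms(2)[of t] st
      by (auto intro: has_integral_eq[rotated] simp: assms(3))
    show "v' \<in> borel_measurable (lebesgue_on {0..L})"
      using bounded_primitive_measurable[OF u] by (rule measurable_cong[THEN iffD1, rotated]) (use assms(3) in auto)
    show "norm (v' t) \<le> B" if "t \<in> {0..L}" for t using B[OF that] assms(3)[OF that] by simp
  qed
qed

lemma bounded_primitive_Pair:
  fixes u :: "real \<Rightarrow> 'a::euclidean_space" and v :: "real \<Rightarrow> 'b::euclidean_space"
  assumes "bounded_primitive L u u'" "bounded_primitive L v v'"
  shows "bounded_primitive L (\<lambda>t. (u t, v t)) (\<lambda>t. (u' t, v' t))"
proof -
  have "bounded_linear (\<lambda>x::'a. (x, 0::'b))" "bounded_linear (\<lambda>x::'b. (0::'a, x))"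
    by (auto intro!: bounded_linear_Pair bounded_linear_ident bounded_linear_zero)
  from bounded_primitive_add[OF bounded_primitive_linear[OF this(1) assms(1)] bounded_primitive_linear[OF this(2) assms(2)]]
  show ?thesis by simp
qed

lemma bounded_primitive_fst:
  fixes u :: "real \<Rightarrow> 'a::euclidean_space" and v :: "real \<Rightarrow> 'b::euclidean_space"
  shows "bounded_primitive L (\<lambda>t. (u t, v t)) (\<lambda>t. (u' t, v' t)) \<Longrightarrow> bounded_primitive L u u'"
  using bounded_primitive_linear[OF bounded_linear_fst] by fastforce

lemma bounded_primitive_snd:
  fixes u :: "real \<Rightarrow> 'a::euclidean_space" and v :: "real \<Rightarrow> 'b::euclidean_space"
  shows "bounded_primitive L (\<lambda>t. (u t, v t)) (\<lambda>t. (u' t, v' t)) \<Longrightarrow> bounded_primitive L v v'"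
  using bounded_primitive_linear[OF bounded_linear_snd] by fastforce

lemma has_integral_if_local_increment_le:
  fixes u z :: "real \<Rightarrow> 'v::euclidean_space"
  assumes int: "\<And>s t. 0 \<le> s \<Longrightarrow> s \<le> t \<Longrightarrow> t \<le> L \<Longrightarrow> z integrable_on {s..t}"
    and local: "\<And>e. e > 0 \<Longrightarrow> \<exists>d>0. \<forall>a b. 0 \<le> a \<longrightarrow> a \<le> b \<longrightarrow> b \<le> L \<longrightarrow> b - a < d \<longrightarrow>
                    norm (u b - u a - integral {a..b} z) \<le> e * (b - a)"
    and st: "0 \<le> s" "s \<le> t" "t \<le> L"
  shows "(z has_integral (u t - u s)) {s..t}"
proof -
  define \<psi> where "\<psi> = (\<lambda>t. u t - integral {0..t} z)"
  have incr: "\<psi> b - \<psi> a = u b - u a - integral {a..b} z" if "0 \<le> a" "a \<le> b" "b \<le> L" for a b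
  proof -
    have "integral {0..a} z + integral {a..b} z = integral {0..b} z"
      by (rule Henstock_Kurzweil_Integration.integral_combine) (use that int in auto)
    then show ?thesis unfolding \<psi>_def by (simp add: algebra_simps)
  qed
  have "(\<psi> has_derivative (\<lambda>_. 0)) (at r within {0..L})" if r: "r \<in> {0..L}" for r
    unfolding has_derivative_within_alt
  proof (intro conjI allI impI)
    fix e :: real assume "e > 0"
    then obtain d where d: "d > 0" "\<And>a b. 0 \<le> a \<Longrightarrow> a \<le> b \<Longrightarrow> b \<le> L \<Longrightarrow> b - a < d \<Longrightarrow>
        norm (u b - u a - integral {a..b} z) \<le> e * (b - a)"
      using local by blast
    have "norm (\<psi> t - \<psi> r) \<le> e * norm (t - r)" if "t \<in> {0..L}" "norm (t - r) < d" for t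
      using d(2)[of r t] d(2)[of t r] incr[of r t] incr[of t r] r that
      by (cases "r \<le> t") (auto simp: norm_minus_commute)
    then show "\<exists>d>0. \<forall>t\<in>{0..L}. norm (t - r) < d \<longrightarrow> norm (\<psi> t - \<psi> r - 0) \<le> e * norm (t - r)"
      using d(1) by auto
  qed simp
  then obtain c where "\<forall>r\<in>{0..L}. \<psi> r = c"
    using has_derivative_zero_constant[of "{0..L}" \<psi>] by auto
  then have "integral {s..t} z = u t - u s" using incr[OF st] st by simp
  then show ?thesis using int[OF st] by (metis integrable_integral)
qed

lemma bilinear_increment_le:
  fixes h :: "'a::euclidean_space \<Rightarrow> 'b::euclidean_space \<Rightarrow> 'c::euclidean_space"
  assumes h: "bounded_bilinear h" and K: "\<And>p q. norm (h p q) \<le> norm p * norm q * K" "K \<ge> 0"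
    and x: "(x' has_integral (x b - x a)) {a..b}" and y: "(y' has_integral (y b - y a)) {a..b}"
    and z: "((\<lambda>r. h (x' r) (y r) + h (x r) (y' r)) has_integral Z) {a..b}"
    and Bx: "\<And>r. r \<in> {a..b} \<Longrightarrow> norm (x' r) \<le> Bx" and By: "\<And>r. r \<in> {a..b} \<Longrightarrow> norm (y' r) \<le> By"
    and near: "\<And>r. r \<in> {a..b} \<Longrightarrow> norm (x r - x a) \<le> \<eta> \<and> norm (y r - y a) \<le> \<eta>"
    and ab: "a \<le> b"
  shows "norm (h (x b) (y b) - h (x a) (y a) - Z) \<le> K * (2 * Bx + By) * \<eta> * (b - a)"
proof -
  interpret bounded_bilinear h by fact
  have a: "a \<in> {a..b}" using ab by simp
  have nonneg: "Bx \<ge> 0" "By \<ge> 0" "\<eta> \<ge> 0"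
    using Bx[OF a] By[OF a] near[OF a] by (meson norm_ge_zero order_trans)+
  define e where "e = (\<lambda>r. h (x' r) (y r - y a) + h (x r - x a) (y' r))"
  have "(e has_integral (Z - h (x b - x a) (y a) - h (x a) (y b - y a))) {a..b}"
  proof -
    have "((\<lambda>r. h (x' r) (y a)) has_integral h (x b - x a) (y a)) {a..b}"
      using has_integral_linear[OF x bounded_linear_left] by (simp add: o_def)
    moreover have "((\<lambda>r. h (x a) (y' r)) has_integral h (x a) (y b - y a)) {a..b}"
      using has_integral_linear[OF y bounded_linear_right] by (simp add: o_def)
    ultimately have "((\<lambda>r. h (x' r) (y r) + h (x r) (y' r) - h (x' r) (y a) - h (x a) (y' r))
        has_integral (Z - h (x b - x a) (y a) - h (x a) (y b - y a))) {a..b}"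
      by (intro has_integral_diff z)
    then show ?thesis
      by (rule has_integral_eq[rotated]) (simp add: e_def diff_left diff_right algebra_simps)
  qed
  moreover have "norm (e r) \<le> K * (Bx + By) * \<eta>" if "r \<in> cbox a b" for r
  proof -
    have "norm (e r) \<le> norm (x' r) * norm (y r - y a) * K + norm (x r - x a) * norm (y' r) * K"
      unfolding e_def by (rule order_trans[OF norm_triangle_ineq add_mono[OF K(1) K(1)]])
    also have "\<dots> \<le> Bx * \<eta> * K + \<eta> * By * K"
      using that near Bx By K(2) nonneg by (intro add_mono mult_right_mono mult_mono) auto
    finally show ?thesis by (simp add: algebra_simps)
  qed
  ultimately have first_order: "norm (Z - h (x b - x a) (y a) - h (x a) (y b - y a)) \<le> K * (Bx + By) * \<eta> * (b - a)"
    using has_integral_bound[of "K * (Bx + By) * \<eta>" e _ a b] K(2) nonneg ab by auto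
  have "norm (x b - x a) \<le> Bx * (b - a)"
    using has_integral_bound[of Bx x' "x b - x a" a b] x Bx nonneg ab by auto
  then have "norm (x b - x a) * norm (y b - y a) * K \<le> (Bx * (b - a)) * \<eta> * K"
    using near[of b] ab K(2) nonneg by (intro mult_right_mono mult_mono) auto
  then have second_order: "norm (h (x b - x a) (y b - y a)) \<le> K * Bx * \<eta> * (b - a)"
    using K(1)[of "x b - x a" "y b - y a"] by (simp add: algebra_simps)
  have "h (x b) (y b) - h (x a) (y a) - Z
      = h (x b - x a) (y b - y a) - (Z - h (x b - x a) (y a) - h (x a) (y b - y a))"
    by (simp add: diff_right diff_left algebra_simps)
  then have "norm (h (x b) (y b) - h (x a) (y a) - Z)
      \<le> norm (h (x b - x a) (y b - y a)) + norm (Z - h (x b - x a) (y a) - h (x a) (y b - y a))"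
    by (simp only: norm_triangle_ineq4)
  also have "\<dots> \<le> K * Bx * \<eta> * (b - a) + K * (Bx + By) * \<eta> * (b - a)"
    using first_order second_order by (rule add_mono[rotated])
  finally show ?thesis by (simp add: algebra_simps)
qed

lemma bilinear_local_increment_le:
  fixes h :: "'a::euclidean_space \<Rightarrow> 'b::euclidean_space \<Rightarrow> 'c::euclidean_space"
  assumes h: "bounded_bilinear h" and x: "bounded_primitive L x x'" and y: "bounded_primitive L y y'"
    and int: "\<And>s t. 0 \<le> s \<Longrightarrow> s \<le> t \<Longrightarrow> t \<le> L \<Longrightarrow> (\<lambda>r. h (x' r) (y r) + h (x r) (y' r)) integrable_on {s..t}"
    and e: "e > 0"
  shows "\<exists>d>0. \<forall>a b. 0 \<le> a \<longrightarrow> a \<le> b \<longrightarrow> b \<le> L \<longrightarrow> b - a < d \<longrightarrow>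
    norm (h (x b) (y b) - h (x a) (y a) - integral {a..b} (\<lambda>r. h (x' r) (y r) + h (x r) (y' r))) \<le> e * (b - a)"
proof -
  interpret bounded_bilinear h by fact
  obtain K where K: "\<And>p q. norm (h p q) \<le> norm p * norm q * K" "K \<ge> 0"
    using nonneg_bounded by blast
  obtain Bx where Bx: "Bx \<ge> 0" "\<And>t. t \<in> {0..L} \<Longrightarrow> norm (x' t) \<le> Bx" using bounded_primitive_boundE[OF x] by blast
  obtain By where By: "By \<ge> 0" "\<And>t. t \<in> {0..L} \<Longrightarrow> norm (y' t) \<le> By" using bounded_primitive_boundE[OF y] by blast
  define C where "C = K * (2 * Bx + By)"
  have "C \<ge> 0" unfolding C_def using K Bx By by simp
  define \<eta> where "\<eta> = e / (C + 1)"
  have "\<eta> > 0" "C * \<eta> \<le> e" unfolding \<eta>_def using \<open>C \<ge> 0\<close> e by (auto simp: field_simps)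
  obtain dx where dx: "dx > 0" "\<And>r r'. r \<in> {0..L} \<Longrightarrow> r' \<in> {0..L} \<Longrightarrow> dist r' r < dx \<Longrightarrow> dist (x r') (x r) < \<eta>"
    using compact_uniformly_continuous[OF bounded_primitive_continuous_on[OF x] compact_Icc] \<open>\<eta> > 0\<close>
    unfolding uniformly_continuous_on_def by metis
  obtain dy where dy: "dy > 0" "\<And>r r'. r \<in> {0..L} \<Longrightarrow> r' \<in> {0..L} \<Longrightarrow> dist r' r < dy \<Longrightarrow> dist (y r') (y r) < \<eta>"
    using compact_uniformly_continuous[OF bounded_primitive_continuous_on[OF y] compact_Icc] \<open>\<eta> > 0\<close>
    unfolding uniformly_continuous_on_def by metis
  have "norm (h (x b) (y b) - h (x a) (y a) - integral {a..b} (\<lambda>r. h (x' r) (y r) + h (x r) (y' r))) \<le> e * (b - a)"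
    if ab: "0 \<le> a" "a \<le> b" "b \<le> L" "b - a < min dx dy" for a b
  proof -
    have "norm (h (x b) (y b) - h (x a) (y a) - integral {a..b} (\<lambda>r. h (x' r) (y r) + h (x r) (y' r)))
        \<le> C * \<eta> * (b - a)"
      unfolding C_def
    proof (rule bilinear_increment_le[OF h K])
      show "norm (x r - x a) \<le> \<eta> \<and> norm (y r - y a) \<le> \<eta>" if "r \<in> {a..b}" for r
        using dx(2)[of a r] dy(2)[of a r] that ab by (auto simp: dist_norm dist_real_def)
      show "((\<lambda>r. h (x' r) (y r) + h (x r) (y' r)) has_integral
          integral {a..b} (\<lambda>r. h (x' r) (y r) + h (x r) (y' r))) {a..b}"
        using int[OF ab(1-3)] by (simp add: integrable_integral)
    qed (use ab Bx By bounded_primitive_has_integral[OF x] bounded_primitive_has_integral[OF y] in auto)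
    also have "\<dots> \<le> e * (b - a)" using \<open>C * \<eta> \<le> e\<close> ab by (intro mult_right_mono) auto
    finally show ?thesis .
  qed
  then show ?thesis using dx(1) dy(1) by (intro exI[of _ "min dx dy"]) auto
qed

lemma bounded_primitive_bilinear:
  fixes h :: "'a::euclidean_space \<Rightarrow> 'b::euclidean_space \<Rightarrow> 'c::euclidean_space"
  assumes h: "bounded_bilinear h" and x: "bounded_primitive L x x'" and y: "bounded_primitive L y y'"
  shows "bounded_primitive L (\<lambda>t. h (x t) (y t)) (\<lambda>t. h (x' t) (y t) + h (x t) (y' t))"
proof -
  interpret bounded_bilinear h by fact
  obtain K where K: "\<And>p q. norm (h p q) \<le> norm p * norm q * K" "K \<ge> 0"
    using nonneg_bounded by blast
  obtain Bx where Bx: "Bx \<ge> 0" "\<And>t. t \<in> {0..L} \<Longrightarrow> norm (x' t) \<le> Bx" using bounded_primitive_boundE[OF x] by blast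
  obtain By where By: "By \<ge> 0" "\<And>t. t \<in> {0..L} \<Longrightarrow> norm (y' t) \<le> By" using bounded_primitive_boundE[OF y] by blast
  have cx: "continuous_on {0..L} x" using x by (rule bounded_primitive_continuous_on)
  have cy: "continuous_on {0..L} y" using y by (rule bounded_primitive_continuous_on)
  obtain Mx where Mx: "Mx \<ge> 0" "\<And>t. t \<in> {0..L} \<Longrightarrow> norm (x t) \<le> Mx"
    using continuous_on_compact_bound[OF compact_Icc cx] by blast
  obtain My where My: "My \<ge> 0" "\<And>t. t \<in> {0..L} \<Longrightarrow> norm (y t) \<le> My"
    using continuous_on_compact_bound[OF compact_Icc cy] by blast
  define z' where "z' = (\<lambda>t. h (x' t) (y t) + h (x t) (y' t))"
  have "bilinear h" using h bilinear_conv_bounded_bilinear by blast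
  have "x \<in> borel_measurable (lebesgue_on {0..L})" "y \<in> borel_measurable (lebesgue_on {0..L})"
    using cx cy by (simp_all add: continuous_imp_measurable_on_sets_lebesgue)
  then have measurable: "z' \<in> borel_measurable (lebesgue_on {0..L})"
    unfolding z'_def
    by (intro borel_measurable_add borel_measurable_bilinear[OF \<open>bilinear h\<close>]
          bounded_primitive_measurable[OF x] bounded_primitive_measurable[OF y]) auto
  have bound: "norm (z' t) \<le> Bx * My * K + Mx * By * K" if "t \<in> {0..L}" for t
  proof -
    have "norm (z' t) \<le> norm (x' t) * norm (y t) * K + norm (x t) * norm (y' t) * K"
      unfolding z'_def by (rule order_trans[OF norm_triangle_ineq add_mono[OF K(1) K(1)]])
    also have "\<dots> \<le> Bx * My * K + Mx * By * K"
      using that Bx By Mx My K by (intro add_mono mult_right_mono mult_mono) auto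
    finally show ?thesis .
  qed
  have int: "z' integrable_on {s..t}" if "0 \<le> s" "s \<le> t" "t \<le> L" for s t
    using bounded_measurable_integrable_on[OF measurable bound that] .
  have local: "\<exists>d>0. \<forall>a b. 0 \<le> a \<longrightarrow> a \<le> b \<longrightarrow> b \<le> L \<longrightarrow> b - a < d \<longrightarrow>
      norm (h (x b) (y b) - h (x a) (y a) - integral {a..b} z') \<le> e * (b - a)" if "e > 0" for e
    using bilinear_local_increment_le[OF h x y int[unfolded z'_def] that] unfolding z'_def .
  have "bounded_primitive L (\<lambda>t. h (x t) (y t)) z'"
    by (rule bounded_primitiveI[OF has_integral_if_local_increment_le[OF int local] measurable bound])
  then show ?thesis unfolding z'_def .
qed

lemma bounded_primitive_inner:
  assumes "bounded_primitive L x x'" "bounded_primitive L y y'"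
  shows "bounded_primitive L (\<lambda>t. inner (x t) (y t)) (\<lambda>t. inner (x' t) (y t) + inner (x t) (y' t))"
  by (rule bounded_primitive_bilinear[OF bounded_bilinear_inner assms])

lemma bounded_primitive_absolutely_integrable_on:
  assumes "bounded_primitive L u u'"
  shows "u' absolutely_integrable_on {0..L}"
proof -
  obtain B where "\<And>t. t \<in> {0..L} \<Longrightarrow> norm (u' t) \<le> B" using bounded_primitive_boundE[OF assms] by blast
  then show ?thesis
    by (intro measurable_bounded_by_integrable_imp_absolutely_integrable[where g="\<lambda>_. B"]
          bounded_primitive_measurable[OF assms]) auto
qed

lemma bounded_primitive_has_vector_derivative:
  assumes u: "bounded_primitive L u u'" and "continuous_on {0..L} u'" "t \<in> {0..L}"
  shows "(u has_vector_derivative u' t) (at t within {0..L})"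
proof -
  have "u s = u 0 + integral {0..s} u'" if "s \<in> {0..L}" for s
    using bounded_primitive_has_integral[OF u, of 0 s] that by (simp add: integral_unique)
  moreover have "((\<lambda>s. u 0 + integral {0..s} u') has_vector_derivative u' t) (at t within {0..L})"
    using has_vector_derivative_add[OF has_vector_derivative_const integral_has_vector_derivative[OF assms(2,3)]]
    by simp
  ultimately show ?thesis by (rule has_vector_derivative_transform[OF assms(3)])
qed

lemma continuous_on_if_has_integral:
  fixes g :: "real \<Rightarrow> 'v::euclidean_space"
  assumes "g integrable_on {0..L}" "\<And>t. t \<in> {0..L} \<Longrightarrow> (g has_integral (u t - u 0)) {0..t}"
  shows "continuous_on {0..L} u"
proof -
  have "continuous_on {0..L} (\<lambda>t. u 0 + integral {0..t} g)"
    using indefinite_integral_continuous_1[OF assms(1)] by (intro continuous_intros)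
  moreover have "u 0 + integral {0..t} g = u t" if "t \<in> {0..L}" for t
    using assms(2)[OF that] by (simp add: integral_unique)
  ultimately show ?thesis using continuous_on_eq by force
qed

lemma continuous_on_pos_if_nonzero:
  fixes f :: "real \<Rightarrow> real"
  assumes f: "continuous_on {0..L} f" and nonzero: "\<And>t. t \<in> {0..L} \<Longrightarrow> f t \<noteq> 0"
    and s: "s \<in> {0..L}" "f s > 0" and t: "t \<in> {0..L}"
  shows "f t > 0"
proof (rule ccontr)
  assume "\<not> f t > 0"
  then obtain x where "x \<in> closed_segment s t" "f x = 0"
    using IVT'[of f t 0 s] IVT2'[of f t 0 s] s t continuous_on_subset[OF f, of "{s..t}"]
      continuous_on_subset[OF f, of "{t..s}"]
    by (cases "s \<le> t") (auto simp: closed_segment_eq_real_ivl)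
  moreover have "closed_segment s t \<subseteq> {0..L}"
    using s t by (auto simp: closed_segment_eq_real_ivl)
  ultimately show False using nonzero by blast
qed

section \<open>Gronwall's lemma and Picard iteration\<close>

lemma bounded_primitive_vanishes_near_zero:
  fixes Q :: "real \<Rightarrow> 'v::euclidean_space"
  assumes Q: "bounded_primitive L Q q"
    and K: "K \<ge> 0" "\<And>t. t \<in> {0..L} \<Longrightarrow> norm (q t) \<le> K * norm (Q t)"
    and a: "a \<in> {0..L}" "Q a = 0" and h: "h \<ge> 0" "K * h \<le> 1/2"
    and t: "t \<in> {0..L}" "\<bar>t - a\<bar> \<le> h"
  shows "Q t = 0"
proof -
  define J where "J = {max (a - h) 0 .. min (a + h) L}"
  have J: "J \<subseteq> {0..L}" "a \<in> J" "t \<in> J" "is_interval J" using a h t by (auto simp: J_def)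
  have "continuous_on J (\<lambda>t. norm (Q t))"
    using continuous_on_subset[OF bounded_primitive_continuous_on[OF Q] J(1)] by (intro continuous_intros)
  moreover have "compact J" by (simp add: J_def)
  ultimately obtain r where r: "r \<in> J" "\<And>s. s \<in> J \<Longrightarrow> norm (Q s) \<le> norm (Q r)"
    using continuous_attains_sup[of J "\<lambda>t. norm (Q t)"] J(2) by blast
  define m where "m = norm (Q r)"
  have segment: "closed_segment a r \<subseteq> J"
    using J(2,4) r(1) by (simp add: closed_segment_subset is_interval_convex)
  have "norm (q s) \<le> K * m" if "s \<in> closed_segment a r" for s
  proof -
    have "s \<in> J" using that segment by blast
    then have "norm (q s) \<le> K * norm (Q s)" "norm (Q s) \<le> m"
      using K(2) r(2) J(1) unfolding m_def by auto
    then show ?thesis using K(1) by (meson mult_left_mono order_trans)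
  qed
  then have "norm (Q r - Q a) \<le> (K * m) * \<bar>r - a\<bar>"
    using bounded_primitive_norm_diff_le[OF Q a(1)] r(1) J(1) by blast
  then have "m \<le> (K * m) * \<bar>r - a\<bar>" using a(2) unfolding m_def by simp
  also have "\<dots> \<le> (K * m) * h"
    using r(1) K(1) unfolding J_def m_def by (intro mult_left_mono) auto
  also have "\<dots> = (K * h) * m" by simp
  also have "\<dots> \<le> 1/2 * m" using h by (intro mult_right_mono) (auto simp: m_def)
  finally show ?thesis using r(2)[OF J(3)] unfolding m_def by simp
qed

(* The zero set is closed, and open by the local version; [0, L] is connected. *)
lemma gronwall_bounded_primitive_eq_0:
  fixes Q :: "real \<Rightarrow> 'v::euclidean_space"
  assumes Q: "bounded_primitive L Q q" and K: "K \<ge> 0" "\<And>t. t \<in> {0..L} \<Longrightarrow> norm (q t) \<le> K * norm (Q t)"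
    and t0: "t0 \<in> {0..L}" "Q t0 = 0" and t: "t \<in> {0..L}"
  shows "Q t = 0"
proof -
  define Z where "Z = {s \<in> {0..L}. Q s = 0}"
  define h where "h = 1 / (2 * K + 2)"
  have h: "h > 0" "K * h \<le> 1/2" using K(1) by (simp_all add: h_def field_simps)
  have "openin (top_of_set {0..L}) Z"
    unfolding openin_euclidean_subtopology_iff
  proof (intro conjI ballI)
    fix a assume a: "a \<in> Z"
    have "s \<in> Z" if "s \<in> {0..L}" "dist s a < h" for s
      using bounded_primitive_vanishes_near_zero[OF Q K, of a h s] a that h
      by (simp add: Z_def dist_real_def)
    then show "\<exists>e>0. \<forall>s\<in>{0..L}. dist s a < e \<longrightarrow> s \<in> Z" using h(1) by blast
  qed (auto simp: Z_def)
  moreover have "closedin (top_of_set {0..L}) Z"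
    unfolding Z_def by (rule continuous_closedin_preimage_constant[OF bounded_primitive_continuous_on[OF Q]])
  ultimately have "Z = {} \<or> Z = {0..L}"
    using connected_clopen[THEN iffD1, OF connected_Icc] by blast
  moreover have "t0 \<in> Z" using t0 by (simp add: Z_def)
  ultimately have "t \<in> Z" using t by blast
  then show ?thesis by (simp add: Z_def)
qed

lemma exists_power_div_fact_le_half:
  fixes c :: real
  shows "\<exists>N>0. c ^ N / fact N \<le> 1/2"
proof -
  have "(\<lambda>n. inverse (fact n) * c ^ n) \<longlonglongrightarrow> 0"
    using summable_LIMSEQ_zero[OF summable_exp] .
  then obtain N where N: "\<And>n. n \<ge> N \<Longrightarrow> norm (inverse (fact n) * c ^ n) < 1/2"
    unfolding LIMSEQ_iff by (metis diff_zero half_gt_zero_iff zero_less_one real_norm_def)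
  have "c ^ Suc N / fact (Suc N) = inverse (fact (Suc N)) * c ^ Suc N"
    by (simp add: divide_inverse mult.commute)
  also have "\<dots> \<le> norm (inverse (fact (Suc N)) * c ^ Suc N)" unfolding real_norm_def by (rule abs_ge_self)
  finally have "c ^ Suc N / fact (Suc N) \<le> 1/2" using N[of "Suc N"] by linarith
  then show ?thesis by blast
qed

lemma has_integral_power_abs_diff:
  fixes a b :: real
  shows "((\<lambda>r. \<bar>r - a\<bar> ^ n) has_integral \<bar>b - a\<bar> ^ Suc n / Suc n) (closed_segment a b)"
proof (cases "a \<le> b")
  case True
  have "((\<lambda>r. (r - a) ^ Suc n / Suc n) has_vector_derivative (r - a) ^ n) (at r within {a..b})" for r
    by (auto intro!: derivative_eq_intros simp: has_real_derivative_iff_has_vector_derivative[symmetric])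
       (cases n, auto simp: field_simps)
  from fundamental_theorem_of_calculus[OF True this] have "((\<lambda>r. (r - a) ^ n) has_integral (b - a) ^ Suc n / Suc n) {a..b}"
    by simp
  then show ?thesis using True
    by (auto simp: closed_segment_eq_real_ivl intro: has_integral_eq[rotated])
next
  case False
  have "((\<lambda>r. - ((a - r) ^ Suc n / Suc n)) has_vector_derivative (a - r) ^ n) (at r within {b..a})" for r
    by (auto intro!: derivative_eq_intros simp: has_real_derivative_iff_has_vector_derivative[symmetric])
       (cases n, auto simp: field_simps)
  from fundamental_theorem_of_calculus[OF _ this] False have "((\<lambda>r. (a - r) ^ n) has_integral (a - b) ^ Suc n / Suc n) {b..a}"
    by simp
  then show ?thesis using False
    by (auto simp: closed_segment_eq_real_ivl intro: has_integral_eq[rotated])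
qed

lemma norm_integral_diff_le:
  fixes g :: "real \<Rightarrow> 'v::euclidean_space"
  assumes g: "g integrable_on {0..L}" and "s \<in> {0..L}" "t \<in> {0..L}"
    and b: "(b has_integral B) (closed_segment s t)" and bound: "\<And>r. r \<in> closed_segment s t \<Longrightarrow> norm (g r) \<le> b r"
  shows "norm (integral {0..t} g - integral {0..s} g) \<le> B"
proof -
  have *: "norm (integral {0..y} g - integral {0..x} g) \<le> B"
    if xy: "x \<in> {0..L}" "y \<in> {0..L}" "x \<le> y" "closed_segment s t = {x..y}" for x y
  proof -
    have "integral {0..x} g + integral {x..y} g = integral {0..y} g"
      by (rule Henstock_Kurzweil_Integration.integral_combine) (use xy integrable_on_subinterval[OF g] in auto)
    moreover have "norm (integral {x..y} g) \<le> B"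
      using Henstock_Kurzweil_Integration.integral_norm_bound_integral[of g "{x..y}" b] integrable_on_subinterval[OF g, of x y]
        b bound xy by (auto simp: integral_unique has_integral_integrable)
    ultimately show ?thesis by (metis add_diff_cancel_left')
  qed
  from *[of s t] *[of t s] assms(2,3) show ?thesis
    by (cases "s \<le> t") (auto simp: closed_segment_eq_real_ivl norm_minus_commute)
qed

(* Integrating from 0 avoids oriented integrals when t < t0. *)
definition picard_operator :: "(real \<Rightarrow> 'v \<Rightarrow> 'v) \<Rightarrow> real \<Rightarrow> 'v \<Rightarrow> (real \<Rightarrow> 'v) \<Rightarrow> real \<Rightarrow> 'v::euclidean_space"
  where "picard_operator F t0 x0 u t = x0 + (integral {0..t} (\<lambda>r. F r (u r)) - integral {0..t0} (\<lambda>r. F r (u r)))"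

lemma picard_operator_diff_le:
  fixes F :: "real \<Rightarrow> 'v::euclidean_space \<Rightarrow> 'v"
  assumes int: "(\<lambda>r. F r (u r)) integrable_on {0..L}" "(\<lambda>r. F r (v r)) integrable_on {0..L}"
    and lip: "\<And>r x y. r \<in> {0..L} \<Longrightarrow> norm (F r x - F r y) \<le> K * norm (x - y)" and K: "K \<ge> 0"
    and close: "\<And>r. r \<in> {0..L} \<Longrightarrow> norm (u r - v r) \<le> (K * \<bar>r - t0\<bar>) ^ n / fact n * D"
    and t0: "t0 \<in> {0..L}" and t: "t \<in> {0..L}"
  shows "norm (picard_operator F t0 x0 u t - picard_operator F t0 x0 v t) \<le> (K * \<bar>t - t0\<bar>) ^ Suc n / fact (Suc n) * D"
proof -
  define g where "g = (\<lambda>r. F r (u r) - F r (v r))"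
  define C where "C = K ^ Suc n / fact n * D"
  have "picard_operator F t0 x0 u t - picard_operator F t0 x0 v t = integral {0..t} g - integral {0..t0} g"
    using integrable_on_subinterval[OF int(1), of 0 t] integrable_on_subinterval[OF int(2), of 0 t]
      integrable_on_subinterval[OF int(1), of 0 t0] integrable_on_subinterval[OF int(2), of 0 t0] t0 t
    unfolding picard_operator_def g_def by (simp add: integral_diff algebra_simps)
  also have "norm \<dots> \<le> C * (\<bar>t - t0\<bar> ^ Suc n / Suc n)"
  proof (rule norm_integral_diff_le[OF _ t0 t])
    show "g integrable_on {0..L}" unfolding g_def using int by (rule integrable_diff)
    show "((\<lambda>r. C * \<bar>r - t0\<bar> ^ n) has_integral C * (\<bar>t - t0\<bar> ^ Suc n / Suc n)) (closed_segment t0 t)"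
      by (intro has_integral_mult_right has_integral_power_abs_diff)
    show "norm (g r) \<le> C * \<bar>r - t0\<bar> ^ n" if "r \<in> closed_segment t0 t" for r
    proof -
      have r: "r \<in> {0..L}" using that t0 t by (auto simp: closed_segment_eq_real_ivl split: if_splits)
      have "norm (g r) \<le> K * ((K * \<bar>r - t0\<bar>) ^ n / fact n * D)"
        unfolding g_def using lip[OF r] close[OF r] K by (meson mult_left_mono order_trans)
      also have "\<dots> = C * \<bar>r - t0\<bar> ^ n" by (simp add: C_def power_mult_distrib)
      finally show ?thesis .
    qed
  qed
  also have "C * (\<bar>t - t0\<bar> ^ Suc n / Suc n) = (K * \<bar>t - t0\<bar>) ^ Suc n / fact (Suc n) * D"
    by (simp add: C_def power_mult_distrib mult_ac del: of_nat_Suc)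
  finally show ?thesis .
qed

lemma ext_cont_in_bcontfun:
  fixes f :: "'a::euclidean_space \<Rightarrow> 'b::metric_space"
  assumes "continuous_on (cbox a b) f"
  shows "ext_cont f a b \<in> bcontfun"
proof -
  obtain g :: "'a \<Rightarrow>\<^sub>C 'b" where "\<And>x. g x = f (clamp a b x)"
    using continuous_on_cbox_bcontfunE[OF assms] by metis
  then have "ext_cont f a b = apply_bcontfun g" by (auto simp: ext_cont_def)
  then show ?thesis by (simp add: apply_bcontfun)
qed

lemma bounded_primitive_if_picard_fixed_point:
  fixes F :: "real \<Rightarrow> 'v::euclidean_space \<Rightarrow> 'v"
  assumes fixed: "\<And>t. t \<in> {0..L} \<Longrightarrow> u t = picard_operator F t0 x0 u t"
    and int: "(\<lambda>r. F r (u r)) integrable_on {0..L}"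
    and meas: "(\<lambda>t. F t (u t)) \<in> borel_measurable (lebesgue_on {0..L})"
    and bound: "\<And>t. t \<in> {0..L} \<Longrightarrow> norm (F t (u t)) \<le> B"
  shows "bounded_primitive L u (\<lambda>t. F t (u t))"
proof (rule bounded_primitiveI[OF _ meas bound])
  fix s t :: real assume st: "0 \<le> s" "s \<le> t" "t \<le> L"
  have "integral {0..t} (\<lambda>r. F r (u r)) = integral {0..s} (\<lambda>r. F r (u r)) + integral {s..t} (\<lambda>r. F r (u r))"
    by (rule Henstock_Kurzweil_Integration.integral_combine[symmetric]) (use st integrable_on_subinterval[OF int] in auto)
  then have "u t - u s = integral {s..t} (\<lambda>r. F r (u r))"
    using fixed[of s] fixed[of t] st unfolding picard_operator_def by simp
  then show "((\<lambda>r. F r (u r)) has_integral (u t - u s)) {s..t}"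
    using integrable_on_subinterval[OF int, of s t] st by (simp add: integrable_integral)
qed

locale lipschitz_ode =
  fixes F :: "real \<Rightarrow> 'v::euclidean_space \<Rightarrow> 'v" and L K t0 :: real
  assumes t0: "t0 \<in> {0..L}"
    and measurable: "\<And>u. continuous_on {0..L} u \<Longrightarrow> (\<lambda>t. F t (u t)) \<in> borel_measurable (lebesgue_on {0..L})"
    and bounded: "\<And>u. continuous_on {0..L} u \<Longrightarrow> \<exists>B. \<forall>t\<in>{0..L}. norm (F t (u t)) \<le> B"
    and lipschitz: "\<And>t x y. t \<in> {0..L} \<Longrightarrow> norm (F t x - F t y) \<le> K * norm (x - y)" and K: "K \<ge> 0"
begin

lemma integrable_on_field: "continuous_on {0..L} u \<Longrightarrow> (\<lambda>r. F r (u r)) integrable_on {0..L}"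
  using bounded bounded_measurable_integrable_on[OF measurable, of u _ 0 L] t0 by fastforce

lemma clamp_in_Icc: "clamp 0 L t \<in> {0..L}"
proof -
  have "clamp 0 L t \<in> cbox 0 L" using t0 by (intro clamp_in_interval) auto
  then show ?thesis by simp
qed

lemma clamp_eq_self: "t \<in> {0..L} \<Longrightarrow> clamp 0 L t = t"
  using clamp_cancel_cbox[of t 0 L] by simp

definition picard :: "'v \<Rightarrow> (real \<Rightarrow>\<^sub>C 'v) \<Rightarrow> (real \<Rightarrow>\<^sub>C 'v)" where
  "picard x0 w = Bcontfun (ext_cont (picard_operator F t0 x0 w) 0 L)"

lemma apply_picard: "picard x0 w t = picard_operator F t0 x0 w (clamp 0 L t)"
proof -
  have "continuous_on (cbox 0 L) (picard_operator F t0 x0 w)"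
    unfolding picard_operator_def cbox_interval
    using indefinite_integral_continuous_1[OF integrable_on_field[of w]] by (intro continuous_intros) simp
  from Bcontfun_inverse[OF ext_cont_in_bcontfun[OF this]] show ?thesis
    by (simp add: picard_def ext_cont_def)
qed

lemma picard_iterate_diff_le:
  "t \<in> {0..L} \<Longrightarrow> norm ((picard x0 ^^ n) a t - (picard x0 ^^ n) b t) \<le> (K * \<bar>t - t0\<bar>) ^ n / fact n * dist a b"
proof (induction n arbitrary: t)
  case 0
  then show ?case using dist_bounded[of a t b] by (simp add: dist_norm)
next
  case (Suc n)
  have "norm (picard_operator F t0 x0 ((picard x0 ^^ n) a) t - picard_operator F t0 x0 ((picard x0 ^^ n) b) t)
      \<le> (K * \<bar>t - t0\<bar>) ^ Suc n / fact (Suc n) * dist a b"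
    by (rule picard_operator_diff_le[OF integrable_on_field integrable_on_field lipschitz K Suc.IH t0 Suc.prems]) simp_all
  then show ?case using Suc.prems by (simp add: apply_picard clamp_eq_self)
qed

lemma picard_iterate_contraction:
  obtains N where "\<And>a b. dist ((picard x0 ^^ N) a) ((picard x0 ^^ N) b) \<le> 1/2 * dist a b"
proof -
  obtain N where N: "N > 0" "(K * L) ^ N / fact N \<le> 1/2"
    using exists_power_div_fact_le_half by blast
  have "dist ((picard x0 ^^ N) a) ((picard x0 ^^ N) b) \<le> 1/2 * dist a b" for a b
  proof (rule dist_bound)
    fix t
    have "(picard x0 ^^ N) w t = (picard x0 ^^ N) w (clamp 0 L t)" for w
      using N(1) by (cases N) (simp_all add: apply_picard clamp_eq_self[OF clamp_in_Icc])
    then have "dist ((picard x0 ^^ N) a t) ((picard x0 ^^ N) b t) \<le> (K * \<bar>clamp 0 L t - t0\<bar>) ^ N / fact N * dist a b"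
      using picard_iterate_diff_le[OF clamp_in_Icc] by (simp add: dist_norm)
    also have "\<dots> \<le> (K * L) ^ N / fact N * dist a b"
      using clamp_in_Icc[of t] t0 K by (intro mult_right_mono divide_right_mono power_mono mult_left_mono) auto
    also have "\<dots> \<le> 1/2 * dist a b" using N(2) by (intro mult_right_mono) auto
    finally show "dist ((picard x0 ^^ N) a t) ((picard x0 ^^ N) b t) \<le> 1/2 * dist a b" .
  qed
  then show ?thesis by (rule that)
qed

lemma solution_exists: "\<exists>u. bounded_primitive L u (\<lambda>t. F t (u t)) \<and> u t0 = x0"
proof -
  obtain N where "\<And>a b. dist ((picard x0 ^^ N) a) ((picard x0 ^^ N) b) \<le> 1/2 * dist a b"
    using picard_iterate_contraction by blast
  then have "\<exists>!x. (picard x0 ^^ N) x = x" by (intro banach_fix_type[of "1/2"]) auto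
  then obtain x where x: "(picard x0 ^^ N) x = x" "\<And>y. (picard x0 ^^ N) y = y \<Longrightarrow> y = x"
    by blast
  have "(picard x0 ^^ N) (picard x0 x) = picard x0 x" using x(1) funpow_swap1[of "picard x0" N x] by simp
  then have "picard x0 x = x" by (rule x(2))
  then have fixed: "x t = picard_operator F t0 x0 x t" if "t \<in> {0..L}" for t
    using apply_picard[of x0 x t] clamp_eq_self[OF that] by simp
  obtain B where "\<forall>t\<in>{0..L}. norm (F t (x t)) \<le> B" using bounded[of x] by auto
  then have "bounded_primitive L x (\<lambda>t. F t (x t))"
    by (intro bounded_primitive_if_picard_fixed_point[of L x F t0 x0] fixed integrable_on_field measurable) auto
  moreover have "x t0 = x0" using fixed[OF t0] by (simp add: picard_operator_def)
  ultimately show ?thesis by blast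
qed

lemma solution_unique:
  assumes u: "bounded_primitive L u (\<lambda>t. F t (u t))" and v: "bounded_primitive L v (\<lambda>t. F t (v t))"
    and "u t0 = v t0" and t: "t \<in> {0..L}"
  shows "u t = v t"
  using gronwall_bounded_primitive_eq_0[OF bounded_primitive_diff[OF u v] K _ t0 _ t] lipschitz assms(3) by auto

end

section \<open>Functions of bounded variation are measurable\<close>

definition variation_sum :: "(real \<Rightarrow> real) \<Rightarrow> real list \<Rightarrow> real" where
  "variation_sum g xs = (\<Sum>i<length xs - 1. \<bar>g (xs ! Suc i) - g (xs ! i)\<bar>)"

definition variation :: "(real \<Rightarrow> real) \<Rightarrow> real \<Rightarrow> real" where
  "variation g x = Sup {variation_sum g xs | xs. sorted xs \<and> set xs \<subseteq> {0..x}}"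

lemma variation_sum_snoc:
  "variation_sum g (xs @ [a]) = variation_sum g xs + (if xs = [] then 0 else \<bar>g a - g (last xs)\<bar>)"
proof (cases xs rule: rev_cases)
  case (snoc ys b)
  have "variation_sum g (xs @ [a])
      = (\<Sum>i<length ys. \<bar>g ((xs @ [a]) ! Suc i) - g ((xs @ [a]) ! i)\<bar>) + \<bar>g a - g b\<bar>"
    unfolding variation_sum_def snoc by (simp add: nth_append)
  also have "(\<Sum>i<length ys. \<bar>g ((xs @ [a]) ! Suc i) - g ((xs @ [a]) ! i)\<bar>) = variation_sum g xs"
    unfolding variation_sum_def snoc by (intro sum.cong) (auto simp: nth_append)
  finally show ?thesis using snoc by simp
qed (simp add: variation_sum_def)

lemma variation_increment_le:
  assumes bv: "bounded_variation_on g 0 L" and xy: "0 \<le> x" "x \<le> y" "y \<le> L"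
  shows "variation g x + \<bar>g y - g x\<bar> \<le> variation g y"
proof -
  define S where "S = (\<lambda>x. {variation_sum g xs | xs. sorted xs \<and> set xs \<subseteq> {0..x}})"
  obtain M where M: "\<And>xs. sorted xs \<Longrightarrow> set xs \<subseteq> {0..L} \<Longrightarrow> variation_sum g xs \<le> M"
    using bv unfolding bounded_variation_on_def variation_sum_def by blast
  have "bdd_above (S y)"
    using M xy unfolding S_def by (intro bdd_aboveI[of _ M]) force
  have "z + \<bar>g y - g x\<bar> \<le> variation g y" if z: "z \<in> S x" for z
  proof -
    obtain xs where xs: "z = variation_sum g xs" "sorted xs" "set xs \<subseteq> {0..x}"
      using z unfolding S_def by blast
    have "variation_sum g (xs @ [x]) \<ge> variation_sum g xs" by (subst variation_sum_snoc) simp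
    moreover have "variation_sum g ((xs @ [x]) @ [y]) = variation_sum g (xs @ [x]) + \<bar>g y - g x\<bar>"
      by (subst variation_sum_snoc) simp
    moreover have "sorted ((xs @ [x]) @ [y])" "set ((xs @ [x]) @ [y]) \<subseteq> {0..y}"
      using xs xy by (auto simp: sorted_append)
    then have "variation_sum g ((xs @ [x]) @ [y]) \<in> S y" unfolding S_def by blast
    then have "variation_sum g ((xs @ [x]) @ [y]) \<le> Sup (S y)"
      using \<open>bdd_above (S y)\<close> by (rule cSup_upper)
    then have "variation_sum g ((xs @ [x]) @ [y]) \<le> variation g y"
      by (simp add: variation_def S_def)
    ultimately show ?thesis using xs(1) by linarith
  qed
  moreover have "S x \<noteq> {}" unfolding S_def by (auto intro: exI[of _ "[]"])
  ultimately have "Sup (S x) \<le> variation g y - \<bar>g y - g x\<bar>"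
    by (intro cSup_least) (auto simp: le_diff_eq)
  then have "variation g x \<le> variation g y - \<bar>g y - g x\<bar>"
    by (simp add: variation_def S_def)
  then show ?thesis by simp
qed

(* Jordan decomposition: g = variation g - (variation g - g) with both terms monotone. *)
lemma bounded_variation_on_borel_measurable:
  assumes bv: "bounded_variation_on g 0 L"
  shows "g \<in> borel_measurable (lebesgue_on {0..L})"
proof -
  have measurable: "f \<in> borel_measurable (lebesgue_on {0..L})" if "mono_on {0..L} f" for f :: "real \<Rightarrow> real"
  proof -
    have "sets (restrict_space borel {0..L}) \<subseteq> sets (restrict_space lebesgue {0..L})"
      by (rule mono_restrict_space) force
    then show ?thesis
      by (rule borel_measurable_subalgebra[OF _ _ borel_measurable_mono_on_fnc[OF that]]) simp
  qed
  have "mono_on {0..L} (variation g)" "mono_on {0..L} (\<lambda>t. variation g t - g t)"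
    using variation_increment_le[OF bv] by (auto intro!: mono_onI) (smt (verit))+
  then have "(\<lambda>t. variation g t - (variation g t - g t)) \<in> borel_measurable (lebesgue_on {0..L})"
    by (intro borel_measurable_diff measurable)
  then show ?thesis by simp
qed

section \<open>Retraction onto balls and orthogonal projections\<close>

definition ball_retraction :: "real \<Rightarrow> 'a::euclidean_space \<Rightarrow> 'a" where
  "ball_retraction R x = closest_point (cball 0 R) x"

lemma ball_retraction_id: "norm x \<le> R \<Longrightarrow> ball_retraction R x = x"
  unfolding ball_retraction_def by (rule closest_point_self) simp

lemma norm_ball_retraction_le: "R \<ge> 0 \<Longrightarrow> norm (ball_retraction R x) \<le> R"
  unfolding ball_retraction_def using closest_point_in_set[of "cball (0::'a) R" x] by auto

lemma ball_retraction_lipschitz: "R \<ge> 0 \<Longrightarrow> norm (ball_retraction R x - ball_retraction R y) \<le> norm (x - y)"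
  unfolding ball_retraction_def using closest_point_lipschitz[of "cball (0::'a) R" x y] by (auto simp: dist_norm)

lemma ball_retraction_eq_scaleR:
  fixes x :: "'a::euclidean_space"
  assumes "R > 0" "norm x > R"
  shows "ball_retraction R x = (R / norm x) *\<^sub>R x"
  unfolding ball_retraction_def
proof (rule closest_point_unique[symmetric])
  have "x \<noteq> 0" using assms by auto
  show "(R / norm x) *\<^sub>R x \<in> cball 0 R" using assms by simp
  show "\<forall>z\<in>cball 0 R. dist x ((R / norm x) *\<^sub>R x) \<le> dist x z"
  proof
    fix z :: 'a assume z: "z \<in> cball 0 R"
    have "x - (R / norm x) *\<^sub>R x = (1 - R / norm x) *\<^sub>R x" by (simp add: algebra_simps)
    moreover have "0 \<le> 1 - R / norm x" using assms by (simp add: divide_le_eq)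
    ultimately have "dist x ((R / norm x) *\<^sub>R x) = (1 - R / norm x) * norm x"
      by (simp add: dist_norm)
    also have "\<dots> = norm x - R" using \<open>x \<noteq> 0\<close> by (simp add: field_simps)
    also have "\<dots> \<le> dist x z" using z norm_triangle_ineq2[of x z] by (simp add: dist_norm)
    finally show "dist x ((R / norm x) *\<^sub>R x) \<le> dist x z" .
  qed
qed (use assms in auto)

lemma ball_retraction_scaleR_cases:
  fixes x :: "'a::euclidean_space"
  assumes "R > 0"
  obtains s where "0 < s" "s \<le> 1" "ball_retraction R x = s *\<^sub>R x" "norm x \<le> R \<Longrightarrow> s = 1"
    "norm x > R \<Longrightarrow> s * norm x = R"
proof (cases "norm x \<le> R")
  case True then show ?thesis using that[of 1] by (simp add: ball_retraction_id)
next
  case False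
  then have "x \<noteq> 0" using assms by auto
  with False show ?thesis
    using that[of "R / norm x"] assms ball_retraction_eq_scaleR[OF assms, of x] by auto
qed

lemma proj_perp_characterization:
  fixes V W x :: "'a::euclidean_space"
  shows "x - proj_perp V W x \<in> span {V, W}" "\<And>z. z \<in> span {V, W} \<Longrightarrow> orthogonal (proj_perp V W x) z"
proof -
  have unique: "p = q"
    if "x - p \<in> span {V, W}" "\<forall>z\<in>span {V, W}. orthogonal p z"
      "x - q \<in> span {V, W}" "\<forall>z\<in>span {V, W}. orthogonal q z" for p q
  proof -
    have "q - p \<in> span {V, W}" using span_diff[OF that(1,3)] by (simp add: algebra_simps)
    then have "orthogonal (q - p) (q - p)"
      using that(2,4) by (simp add: orthogonal_def inner_diff_left)
    then show ?thesis by (simp add: orthogonal_def)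
  qed
  obtain y z where "y \<in> span {V, W}" "\<And>w. w \<in> span {V, W} \<Longrightarrow> orthogonal z w" "x = y + z"
    using orthogonal_subspace_decomp_exists by blast
  then have "\<exists>!p. x - p \<in> span {V, W} \<and> (\<forall>w\<in>span {V, W}. orthogonal p w)"
    using unique by (intro ex1I[of _ z]) auto
  from theI'[OF this] show "x - proj_perp V W x \<in> span {V, W}"
    "\<And>z. z \<in> span {V, W} \<Longrightarrow> orthogonal (proj_perp V W x) z"
    unfolding proj_perp_def by auto
qed

lemma proj_perp_unique:
  fixes V W x y :: "'a::euclidean_space"
  assumes "x - y \<in> span {V, W}" "\<And>z. z \<in> span {V, W} \<Longrightarrow> orthogonal y z"
  shows "proj_perp V W x = y"
proof -
  have "(x - proj_perp V W x) - (x - y) \<in> span {V, W}"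
    by (rule span_diff[OF proj_perp_characterization(1) assms(1)])
  then have "y - proj_perp V W x \<in> span {V, W}" by (simp add: algebra_simps)
  then have "orthogonal (y - proj_perp V W x) (y - proj_perp V W x)"
    using assms(2) proj_perp_characterization(2) by (simp add: orthogonal_def inner_diff_left)
  then show ?thesis by (simp add: orthogonal_def)
qed

lemma norm_proj_perp_le: "norm (proj_perp V W x) \<le> norm x"
proof -
  define p where "p = proj_perp V W x"
  have "orthogonal p (x - p)"
    unfolding p_def by (rule proj_perp_characterization(2)[OF proj_perp_characterization(1)])
  then have "inner p (x - p) = 0" by (simp add: orthogonal_def)
  then have "(norm x)\<^sup>2 = (norm p)\<^sup>2 + (norm (x - p))\<^sup>2"
    by (simp add: power2_norm_eq_inner inner_diff_left inner_diff_right inner_commute)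
  then have "(norm p)\<^sup>2 \<le> (norm x)\<^sup>2" by simp
  then show ?thesis unfolding p_def by (simp add: power2_le_iff_abs_le)
qed

lemma inner_proj_perp_eq_0: "inner (proj_perp V W x) V = 0" "inner (proj_perp V W x) W = 0"
  using proj_perp_characterization(2)[of _ V W x] span_base[of _ "{V, W}"]
  by (auto simp: orthogonal_def)

lemma proj_perp_orthogonal_pair:
  fixes V W x :: "'a::euclidean_space"
  assumes "inner V V = 1" "inner V W = 0" "W \<noteq> 0"
  shows "proj_perp V W x = x - inner x V *\<^sub>R V - (inner x W / inner W W) *\<^sub>R W"
proof (rule proj_perp_unique)
  show "x - (x - inner x V *\<^sub>R V - (inner x W / inner W W) *\<^sub>R W) \<in> span {V, W}"
    by (simp add: span_add span_mul span_base)
  show "orthogonal (x - inner x V *\<^sub>R V - (inner x W / inner W W) *\<^sub>R W) z" if "z \<in> span {V, W}" for z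
  proof (rule orthogonal_to_span[OF that])
    fix y assume "y \<in> {V, W}"
    then show "orthogonal (x - inner x V *\<^sub>R V - (inner x W / inner W W) *\<^sub>R W) y"
      using assms by (auto simp: orthogonal_def inner_diff_left inner_diff_right inner_commute)
  qed
qed

section \<open>Bounded Lipschitz maps\<close>

definition bounded_lipschitz :: "('v::real_normed_vector \<Rightarrow> 'w::real_normed_vector) \<Rightarrow> bool" where
  "bounded_lipschitz f \<longleftrightarrow> (\<exists>M. \<forall>x. norm (f x) \<le> M) \<and> (\<exists>K. \<forall>x y. norm (f x - f y) \<le> K * norm (x - y))"

lemma bounded_lipschitzE:
  assumes "bounded_lipschitz f"
  obtains M K where "M \<ge> 0" "K \<ge> 0" "\<And>x. norm (f x) \<le> M" "\<And>x y. norm (f x - f y) \<le> K * norm (x - y)"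
proof -
  from assms obtain M K where M: "\<And>x. norm (f x) \<le> M" and K: "\<And>x y. norm (f x - f y) \<le> K * norm (x - y)"
    unfolding bounded_lipschitz_def by blast
  have "norm (f x) \<le> max M 0" for x using M[of x] by (simp add: le_max_iff_disj)
  moreover have "norm (f x - f y) \<le> max K 0 * norm (x - y)" for x y
    using K[of x y] by (meson max.cobounded1 mult_right_mono norm_ge_zero order_trans)
  ultimately show ?thesis using that[of "max M 0" "max K 0"] by auto
qed

lemma bounded_lipschitz_continuous_on: "bounded_lipschitz f \<Longrightarrow> continuous_on S f"
proof -
  assume "bounded_lipschitz f"
  then obtain K where "\<And>x y. norm (f x - f y) \<le> K * norm (x - y)" "K \<ge> 0"
    using bounded_lipschitzE by metis
  then have "K-lipschitz_on S f" by (intro lipschitz_onI) (auto simp: dist_norm)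
  then show ?thesis by (rule lipschitz_on_continuous_on)
qed

lemma bounded_lipschitz_const [simp]: "bounded_lipschitz (\<lambda>x. c)"
  unfolding bounded_lipschitz_def by (auto intro: exI[of _ "norm c"] exI[of _ 0])

lemma bounded_lipschitz_add:
  assumes "bounded_lipschitz f" "bounded_lipschitz g"
  shows "bounded_lipschitz (\<lambda>x. f x + g x)"
proof -
  obtain M K where f: "\<And>x. norm (f x) \<le> M" "\<And>x y. norm (f x - f y) \<le> K * norm (x - y)"
    using bounded_lipschitzE[OF assms(1)] by metis
  obtain M' K' where g: "\<And>x. norm (g x) \<le> M'" "\<And>x y. norm (g x - g y) \<le> K' * norm (x - y)"
    using bounded_lipschitzE[OF assms(2)] by metis
  have "norm (f x + g x) \<le> M + M'" for x using f g by (meson add_mono norm_triangle_ineq order_trans)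
  moreover have "norm ((f x + g x) - (f y + g y)) \<le> (K + K') * norm (x - y)" for x y
  proof -
    have "norm ((f x + g x) - (f y + g y)) \<le> norm (f x - f y) + norm (g x - g y)"
      by (metis add_diff_add norm_triangle_ineq)
    also have "\<dots> \<le> (K + K') * norm (x - y)" using f g by (simp add: add_mono distrib_right)
    finally show ?thesis .
  qed
  ultimately show ?thesis unfolding bounded_lipschitz_def by blast
qed

lemma bounded_lipschitz_bilinear:
  assumes h: "bounded_bilinear h" and "bounded_lipschitz f" "bounded_lipschitz g"
  shows "bounded_lipschitz (\<lambda>x. h (f x) (g x))"
proof -
  interpret bounded_bilinear h by fact
  obtain Kh where Kh: "Kh \<ge> 0" "\<And>a b. norm (h a b) \<le> norm a * norm b * Kh" using nonneg_bounded by blast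
  obtain M K where f: "M \<ge> 0" "K \<ge> 0" "\<And>x. norm (f x) \<le> M" "\<And>x y. norm (f x - f y) \<le> K * norm (x - y)"
    using bounded_lipschitzE[OF assms(2)] by metis
  obtain M' K' where g: "M' \<ge> 0" "K' \<ge> 0" "\<And>x. norm (g x) \<le> M'" "\<And>x y. norm (g x - g y) \<le> K' * norm (x - y)"
    using bounded_lipschitzE[OF assms(3)] by metis
  have "norm (h (f x) (g x)) \<le> M * M' * Kh" for x
    using f g Kh by (intro order_trans[OF Kh(2)] mult_right_mono mult_mono) auto
  moreover have "norm (h (f x) (g x) - h (f y) (g y)) \<le> (Kh * (K * M' + M * K')) * norm (x - y)" for x y
  proof -
    have "h (f x) (g x) - h (f y) (g y) = h (f x - f y) (g x) + h (f y) (g x - g y)"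
      by (simp add: diff_left diff_right)
    then have "norm (h (f x) (g x) - h (f y) (g y))
        \<le> norm (f x - f y) * norm (g x) * Kh + norm (f y) * norm (g x - g y) * Kh"
      by (metis norm_triangle_le add_mono Kh(2))
    also have "\<dots> \<le> (K * norm (x - y)) * M' * Kh + M * (K' * norm (x - y)) * Kh"
      using f g Kh(1) by (intro add_mono mult_right_mono mult_mono) auto
    also have "\<dots> = (Kh * (K * M' + M * K')) * norm (x - y)" by (simp add: algebra_simps)
    finally show ?thesis .
  qed
  ultimately show ?thesis unfolding bounded_lipschitz_def by blast
qed

lemma bounded_lipschitz_scaleR:
  fixes f :: "'v::real_normed_vector \<Rightarrow> real"
  shows "bounded_lipschitz f \<Longrightarrow> bounded_lipschitz g \<Longrightarrow> bounded_lipschitz (\<lambda>x. f x *\<^sub>R g x)"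
  by (rule bounded_lipschitz_bilinear[OF bounded_bilinear_scaleR])

lemma bounded_lipschitz_mult:
  fixes f g :: "'v::real_normed_vector \<Rightarrow> real"
  shows "bounded_lipschitz f \<Longrightarrow> bounded_lipschitz g \<Longrightarrow> bounded_lipschitz (\<lambda>x. f x * g x)"
  by (rule bounded_lipschitz_bilinear[OF bounded_bilinear_mult])

lemma bounded_lipschitz_inner:
  fixes f g :: "'v::real_normed_vector \<Rightarrow> 'w::real_inner"
  shows "bounded_lipschitz f \<Longrightarrow> bounded_lipschitz g \<Longrightarrow> bounded_lipschitz (\<lambda>x. inner (f x) (g x))"
  by (rule bounded_lipschitz_bilinear[OF bounded_bilinear_inner])

lemma bounded_lipschitz_diff:
  assumes "bounded_lipschitz f" "bounded_lipschitz g"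
  shows "bounded_lipschitz (\<lambda>x. f x - g x)"
  using bounded_lipschitz_add[OF assms(1) bounded_lipschitz_scaleR[OF bounded_lipschitz_const assms(2)], of "-1"]
  by simp

lemma bounded_lipschitz_divide_const:
  fixes f :: "'v::real_normed_vector \<Rightarrow> real"
  shows "bounded_lipschitz f \<Longrightarrow> bounded_lipschitz (\<lambda>x. f x / a)"
  using bounded_lipschitz_mult[OF _ bounded_lipschitz_const, of f "1/a"] by simp

lemma bounded_lipschitz_Pair:
  assumes "bounded_lipschitz f" "bounded_lipschitz g"
  shows "bounded_lipschitz (\<lambda>x. (f x, g x))"
proof -
  obtain M K where f: "\<And>x. norm (f x) \<le> M" "\<And>x y. norm (f x - f y) \<le> K * norm (x - y)"
    using bounded_lipschitzE[OF assms(1)] by metis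
  obtain M' K' where g: "\<And>x. norm (g x) \<le> M'" "\<And>x y. norm (g x - g y) \<le> K' * norm (x - y)"
    using bounded_lipschitzE[OF assms(2)] by metis
  have "norm (f x, g x) \<le> M + M'" for x using f g norm_Pair_le by (meson add_mono order_trans)
  moreover have "norm ((f x, g x) - (f y, g y)) \<le> (K + K') * norm (x - y)" for x y
    using norm_Pair_le[of "f x - f y" "g x - g y"] f(2)[of x y] g(2)[of x y] by (simp add: distrib_right)
  ultimately show ?thesis unfolding bounded_lipschitz_def by blast
qed

lemma bounded_lipschitz_ball_retraction:
  fixes l :: "'v::real_normed_vector \<Rightarrow> 'a::euclidean_space"
  assumes "bounded_linear l" "R \<ge> 0"
  shows "bounded_lipschitz (\<lambda>x. ball_retraction R (l x))"
proof -
  interpret bounded_linear l by fact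
  obtain K where K: "\<And>x. norm (l x) \<le> norm x * K" using nonneg_bounded by blast
  have "norm (ball_retraction R (l x) - ball_retraction R (l y)) \<le> K * norm (x - y)" for x y
    using ball_retraction_lipschitz[OF assms(2), of "l x" "l y"] K[of "x - y"]
    by (simp add: diff[symmetric] mult.commute)
  then show ?thesis
    unfolding bounded_lipschitz_def using norm_ball_retraction_le[OF assms(2)] by blast
qed

section \<open>The modified system\<close>

locale sphere_curve_ivp =
  fixes \<beta> :: "real \<Rightarrow> real" and L Mb f0 t0 :: real and lam \<tau>0 \<tau>1 :: "'a::euclidean_space"
  assumes L: "L > 0" and \<beta>_measurable: "\<beta> \<in> borel_measurable (lebesgue_on {0..L})"
    and Mb: "Mb > 0" and \<beta>_bound: "\<And>t. t \<in> {0..L} \<Longrightarrow> \<bar>\<beta> t\<bar> \<le> Mb"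
    and lam: "norm lam = 1" and \<tau>0: "norm \<tau>0 = 1" and orth: "inner \<tau>0 \<tau>1 = 0"
    and f0: "f0 > 0" and t0: "t0 \<in> {0..L}"
    and indep: "\<forall>a b c::real. a *\<^sub>R \<tau>0 + b *\<^sub>R \<tau>1 + c *\<^sub>R lam = 0 \<longrightarrow> a = 0 \<and> b = 0 \<and> c = 0"
begin

definition "c = norm \<tau>1"

(* For |T| = 1, T . D = 0 and |D| = c, perp T D is proj_perp T D lam and perp_sq T D its squared norm. *)
definition perp :: "'a \<Rightarrow> 'a \<Rightarrow> 'a" where
  "perp T D = lam - inner lam T *\<^sub>R T - (inner lam D / c\<^sup>2) *\<^sub>R D"

definition perp_sq :: "'a \<Rightarrow> 'a \<Rightarrow> real" where
  "perp_sq T D = 1 - (inner lam T)\<^sup>2 - (inner lam D)\<^sup>2 / c\<^sup>2"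

definition "k2 = f0\<^sup>2 * perp_sq \<tau>0 \<tau>1"

(* An a priori bound for |f|, since |f'| = |\<beta> (lam . tau')| <= Mb c. *)
definition "f_max = f0 + Mb * c * L + 1"

(* The system for x = (tau, tau', f), changed off the invariant set |tau| = 1, tau . tau' = 0,
   |tau'| = c, f^2 perp_sq = k2, |f| <= f_max so that it becomes globally Lipschitz; gain x is the
   replacement for f^-1 |tau'|^2. *)
definition perp_field :: "'a \<times> 'a \<times> real \<Rightarrow> 'a" where
  "perp_field x = perp (ball_retraction 1 (fst x)) (ball_retraction c (fst (snd x)))"

definition gain :: "'a \<times> 'a \<times> real \<Rightarrow> real" where
  "gain x = c\<^sup>2 * ball_retraction f_max (snd (snd x)) * inner (perp_field x) (perp_field x) / k2"

definition linear_part :: "'a \<times> 'a \<times> real \<Rightarrow> 'a \<times> 'a \<times> real" where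
  "linear_part x = (fst (snd x), - (c\<^sup>2) *\<^sub>R fst x, 0)"

definition forcing :: "'a \<times> 'a \<times> real \<Rightarrow> 'a \<times> 'a \<times> real" where
  "forcing x = (0, gain x *\<^sub>R perp_field x, inner lam (ball_retraction c (fst (snd x))))"

definition field :: "real \<Rightarrow> 'a \<times> 'a \<times> real \<Rightarrow> 'a \<times> 'a \<times> real" where
  "field t x = linear_part x + \<beta> t *\<^sub>R forcing x"

lemma c_pos: "c > 0"
  using indep[rule_format, of 0 1 0] unfolding c_def by auto

lemma inner_lam_lam: "inner lam lam = 1"
  using lam by (simp add: power2_norm_eq_inner[symmetric])

lemma abs_inner_lam_le: "\<bar>inner lam v\<bar> \<le> norm v"
  using Cauchy_Schwarz_ineq2[of lam v] lam by simp

lemma inner_perp_perp: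
  assumes "inner T T = 1" "inner T D = 0" "inner D D = c\<^sup>2"
  shows "inner (perp T D) (perp T D) = perp_sq T D" "inner lam (perp T D) = perp_sq T D"
proof -
  have c2: "c\<^sup>2 \<noteq> 0" using c_pos by simp
  show "inner lam (perp T D) = perp_sq T D"
    unfolding perp_def perp_sq_def using inner_lam_lam
    by (simp add: inner_diff_right power2_eq_square divide_simps)
  have "inner (perp T D) (perp T D) = 1 + (inner lam T)\<^sup>2 + (inner lam D / c\<^sup>2)\<^sup>2 * c\<^sup>2
      - 2 * (inner lam T)\<^sup>2 - 2 * ((inner lam D)\<^sup>2 / c\<^sup>2)"
    unfolding perp_def using inner_lam_lam assms
    by (simp add: inner_diff_left inner_diff_right inner_commute power2_eq_square algebra_simps)
  also have "\<dots> = perp_sq T D"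
    unfolding perp_sq_def using c2 by (simp add: field_simps power2_eq_square)
  finally show "inner (perp T D) (perp T D) = perp_sq T D" .
qed

lemma perp_sq_initial_pos: "perp_sq \<tau>0 \<tau>1 > 0"
proof -
  have "inner \<tau>0 \<tau>0 = 1" "inner \<tau>1 \<tau>1 = c\<^sup>2"
    using \<tau>0 by (simp_all add: c_def power2_norm_eq_inner[symmetric])
  then have eq: "perp_sq \<tau>0 \<tau>1 = inner (perp \<tau>0 \<tau>1) (perp \<tau>0 \<tau>1)"
    using inner_perp_perp(1) orth by simp
  have "perp \<tau>0 \<tau>1 \<noteq> 0"
  proof
    assume "perp \<tau>0 \<tau>1 = 0"
    then have "(- inner lam \<tau>0) *\<^sub>R \<tau>0 + (- (inner lam \<tau>1 / c\<^sup>2)) *\<^sub>R \<tau>1 + 1 *\<^sub>R lam = 0"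
      unfolding perp_def by (simp add: algebra_simps)
    then show False using indep[rule_format, of "- inner lam \<tau>0" "- (inner lam \<tau>1 / c\<^sup>2)" 1] by simp
  qed
  then show ?thesis unfolding eq by simp
qed

lemma k2_pos: "k2 > 0"
  unfolding k2_def using f0 perp_sq_initial_pos by simp

lemma f_max_pos: "f_max > 0"
  unfolding f_max_def using f0 Mb c_pos L by (simp add: add_pos_nonneg)

lemma field_components:
  "fst (field t x) = fst (snd x)"
  "fst (snd (field t x)) = - (c\<^sup>2) *\<^sub>R fst x + (\<beta> t * gain x) *\<^sub>R perp_field x"
  "snd (snd (field t x)) = \<beta> t * inner lam (ball_retraction c (fst (snd x)))"
  unfolding field_def linear_part_def forcing_def by simp_all

lemma bounded_lipschitz_gain: "bounded_lipschitz gain"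
  and bounded_lipschitz_forcing: "bounded_lipschitz forcing"
proof -
  have "bounded_linear (\<lambda>x::'a \<times> 'a \<times> real. fst (snd x))" "bounded_linear (\<lambda>x::'a \<times> 'a \<times> real. snd (snd x))"
    by (simp_all add: bounded_linear_compose[OF bounded_linear_fst bounded_linear_snd, unfolded o_def]
        bounded_linear_compose[OF bounded_linear_snd bounded_linear_snd, unfolded o_def])
  then have retract: "bounded_lipschitz (\<lambda>x::'a \<times> 'a \<times> real. ball_retraction 1 (fst x))"
    "bounded_lipschitz (\<lambda>x::'a \<times> 'a \<times> real. ball_retraction c (fst (snd x)))"
    "bounded_lipschitz (\<lambda>x::'a \<times> 'a \<times> real. ball_retraction f_max (snd (snd x)))"
    using c_pos f_max_pos by (auto intro!: bounded_lipschitz_ball_retraction bounded_linear_fst)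
  then have "bounded_lipschitz perp_field"
    unfolding perp_field_def perp_def
    by (intro bounded_lipschitz_diff bounded_lipschitz_scaleR bounded_lipschitz_inner
          bounded_lipschitz_divide_const bounded_lipschitz_const)
  then show "bounded_lipschitz gain"
    unfolding gain_def[abs_def] using retract
    by (intro bounded_lipschitz_divide_const bounded_lipschitz_mult bounded_lipschitz_inner bounded_lipschitz_const)
  then show "bounded_lipschitz forcing"
    unfolding forcing_def[abs_def] using retract \<open>bounded_lipschitz perp_field\<close>
    by (intro bounded_lipschitz_Pair bounded_lipschitz_const bounded_lipschitz_scaleR bounded_lipschitz_inner)
qed

lemma bounded_linear_linear_part: "bounded_linear linear_part"
  unfolding linear_part_def
  by (intro bounded_linear_Pair bounded_linear_zero bounded_linear_compose[OF bounded_linear_scaleR_right bounded_linear_fst]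
        bounded_linear_compose[OF bounded_linear_fst bounded_linear_snd, unfolded o_def])

lemma linear_part_lipschitz:
  obtains K where "K \<ge> 0" "\<And>x y. norm (linear_part x - linear_part y) \<le> K * norm (x - y)"
proof -
  interpret bounded_linear linear_part by (rule bounded_linear_linear_part)
  obtain K where "\<And>x. norm (linear_part x) \<le> norm x * K" "K \<ge> 0" using nonneg_bounded by blast
  then show ?thesis using that[of K] by (simp add: diff[symmetric] mult.commute)
qed

lemma field_lipschitz: obtains K where "K \<ge> 0" "\<And>t x y. t \<in> {0..L} \<Longrightarrow> norm (field t x - field t y) \<le> K * norm (x - y)"
proof -
  obtain KA where KA: "KA \<ge> 0" "\<And>x y. norm (linear_part x - linear_part y) \<le> KA * norm (x - y)"
    using linear_part_lipschitz by blast
  obtain MB KB where KB: "KB \<ge> 0" "\<And>x y. norm (forcing x - forcing y) \<le> KB * norm (x - y)"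
    using bounded_lipschitzE[OF bounded_lipschitz_forcing] by metis
  have "norm (field t x - field t y) \<le> (KA + Mb * KB) * norm (x - y)" if t: "t \<in> {0..L}" for t x y
  proof -
    have "field t x - field t y = (linear_part x - linear_part y) + \<beta> t *\<^sub>R (forcing x - forcing y)"
      unfolding field_def by (simp add: algebra_simps)
    then have "norm (field t x - field t y) \<le> norm (linear_part x - linear_part y) + \<bar>\<beta> t\<bar> * norm (forcing x - forcing y)"
      by (metis norm_scaleR norm_triangle_ineq)
    also have "\<dots> \<le> KA * norm (x - y) + Mb * (KB * norm (x - y))"
      using KA KB \<beta>_bound[OF t] by (intro add_mono mult_mono) auto
    finally show ?thesis by (simp add: algebra_simps)
  qed
  then show ?thesis using that[of "KA + Mb * KB"] KA KB Mb by auto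
qed

lemma field_measurable_bounded:
  assumes u: "continuous_on {0..L} u"
  shows "(\<lambda>t. field t (u t)) \<in> borel_measurable (lebesgue_on {0..L})"
    and "\<exists>B. \<forall>t\<in>{0..L}. norm (field t (u t)) \<le> B"
proof -
  have "continuous_on UNIV linear_part" "continuous_on UNIV forcing"
    by (simp_all add: linear_continuous_on bounded_linear_linear_part
          bounded_lipschitz_continuous_on bounded_lipschitz_forcing)
  then have cont: "continuous_on {0..L} (\<lambda>t. linear_part (u t))" "continuous_on {0..L} (\<lambda>t. forcing (u t))"
    by (auto intro: continuous_on_compose2[OF _ u])
  then show "(\<lambda>t. field t (u t)) \<in> borel_measurable (lebesgue_on {0..L})"
    unfolding field_def
    by (intro borel_measurable_add borel_measurable_scaleR \<beta>_measurable continuous_imp_measurable_on_sets_lebesgue) auto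
  obtain MA where MA: "\<And>t. t \<in> {0..L} \<Longrightarrow> norm (linear_part (u t)) \<le> MA"
    using continuous_on_compact_bound[OF compact_Icc cont(1)] by blast
  obtain MB KB where MB: "MB \<ge> 0" "\<And>x. norm (forcing x) \<le> MB"
    using bounded_lipschitzE[OF bounded_lipschitz_forcing] by metis
  have "norm (field t (u t)) \<le> MA + Mb * MB" if t: "t \<in> {0..L}" for t
  proof -
    have "norm (\<beta> t *\<^sub>R forcing (u t)) \<le> Mb * MB" using \<beta>_bound[OF t] MB by (simp add: mult_mono)
    then show ?thesis unfolding field_def using MA[OF t] by (meson add_mono norm_triangle_ineq order_trans)
  qed
  then show "\<exists>B. \<forall>t\<in>{0..L}. norm (field t (u t)) \<le> B" by blast
qed

definition modified_solution :: "(real \<Rightarrow> 'a) \<Rightarrow> (real \<Rightarrow> 'a) \<Rightarrow> (real \<Rightarrow> real) \<Rightarrow> bool" where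
  "modified_solution T D f \<longleftrightarrow>
     bounded_primitive L (\<lambda>t. (T t, D t, f t)) (\<lambda>t. field t (T t, D t, f t)) \<and>
     T t0 = \<tau>0 \<and> D t0 = \<tau>1 \<and> f t0 = f0"

lemma modified_solution_exists: "\<exists>T D f. modified_solution T D f"
proof -
  obtain K where "K \<ge> 0" "\<And>t x y. t \<in> {0..L} \<Longrightarrow> norm (field t x - field t y) \<le> K * norm (x - y)"
    using field_lipschitz by blast
  then interpret ode: lipschitz_ode field L K t0
    using t0 by unfold_locales (simp_all add: field_measurable_bounded)
  obtain u where "bounded_primitive L u (\<lambda>t. field t (u t))" "u t0 = (\<tau>0, \<tau>1, f0)"
    using ode.solution_exists by blast
  then show ?thesis
    unfolding modified_solution_def
    by (intro exI[of _ "\<lambda>t. fst (u t)"] exI[of _ "\<lambda>t. fst (snd (u t))"] exI[of _ "\<lambda>t. snd (snd (u t))"]) simp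
qed

lemma modified_solution_unique:
  assumes "modified_solution T D f" "modified_solution T' D' f'" "t \<in> {0..L}"
  shows "T t = T' t" "D t = D' t" "f t = f' t"
proof -
  obtain K where "K \<ge> 0" "\<And>t x y. t \<in> {0..L} \<Longrightarrow> norm (field t x - field t y) \<le> K * norm (x - y)"
    using field_lipschitz by blast
  then interpret ode: lipschitz_ode field L K t0
    using t0 by unfold_locales (simp_all add: field_measurable_bounded)
  have "(T t, D t, f t) = (T' t, D' t, f' t)"
    by (rule ode.solution_unique[where u = "\<lambda>t. (T t, D t, f t)" and v = "\<lambda>t. (T' t, D' t, f' t)"])
       (use assms in \<open>simp_all add: modified_solution_def\<close>)
  then show "T t = T' t" "D t = D' t" "f t = f' t" by simp_all
qed

section \<open>Invariants of the modified system\<close>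

lemma modified_solution_components:
  assumes "modified_solution T D f"
  shows "bounded_primitive L T D"
    and "bounded_primitive L D (\<lambda>t. - (c\<^sup>2) *\<^sub>R T t + (\<beta> t * gain (T t, D t, f t)) *\<^sub>R perp_field (T t, D t, f t))"
    and "bounded_primitive L f (\<lambda>t. \<beta> t * inner lam (ball_retraction c (D t)))"
proof -
  have u: "bounded_primitive L (\<lambda>t. (T t, D t, f t)) (\<lambda>t. field t (T t, D t, f t))"
    using assms by (simp add: modified_solution_def)
  have "bounded_linear (\<lambda>x::'a \<times> 'a \<times> real. fst (snd x))" "bounded_linear (\<lambda>x::'a \<times> 'a \<times> real. snd (snd x))"
    by (simp_all add: bounded_linear_compose[OF bounded_linear_fst bounded_linear_snd, unfolded o_def]
        bounded_linear_compose[OF bounded_linear_snd bounded_linear_snd, unfolded o_def])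
  from bounded_primitive_linear[OF bounded_linear_fst u] bounded_primitive_linear[OF this(1) u]
    bounded_primitive_linear[OF this(2) u]
  show "bounded_primitive L T D"
    "bounded_primitive L D (\<lambda>t. - (c\<^sup>2) *\<^sub>R T t + (\<beta> t * gain (T t, D t, f t)) *\<^sub>R perp_field (T t, D t, f t))"
    "bounded_primitive L f (\<lambda>t. \<beta> t * inner lam (ball_retraction c (D t)))"
    by (simp_all add: field_components)
qed

lemma abs_inner_perp_retraction_left:
  fixes T D :: 'a
  shows "\<bar>inner T (perp (ball_retraction 1 T) (ball_retraction c D))\<bar> \<le> norm T * \<bar>inner T T - 1\<bar> + \<bar>inner T D\<bar> / c"
proof -
  obtain s1 where s1: "0 < s1" "s1 \<le> 1" "ball_retraction 1 T = s1 *\<^sub>R T" "norm T \<le> 1 \<Longrightarrow> s1 = 1" "norm T > 1 \<Longrightarrow> s1 * norm T = 1"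
    using ball_retraction_scaleR_cases[of 1 T] by auto
  obtain s2 where s2: "0 < s2" "s2 \<le> 1" "ball_retraction c D = s2 *\<^sub>R D"
    using ball_retraction_scaleR_cases[of c D] c_pos by auto
  have "inner T (perp (ball_retraction 1 T) (ball_retraction c D))
      = inner lam T * (1 - s1\<^sup>2 * inner T T) - (s2\<^sup>2 * inner lam D) * inner T D / c\<^sup>2"
    unfolding perp_def s1(3) s2(3)
    by (simp add: inner_diff_right inner_commute[of T lam] power2_eq_square algebra_simps)
  also have "\<bar>\<dots>\<bar> \<le> \<bar>inner lam T\<bar> * \<bar>1 - s1\<^sup>2 * inner T T\<bar> + \<bar>s2\<^sup>2 * inner lam D\<bar> * \<bar>inner T D\<bar> / c\<^sup>2"
    by (rule order_trans[OF abs_triangle_ineq4]) (simp add: abs_mult)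
  also have "\<dots> \<le> norm T * \<bar>inner T T - 1\<bar> + c * \<bar>inner T D\<bar> / c\<^sup>2"
  proof (intro add_mono mult_mono divide_right_mono)
    show "\<bar>1 - s1\<^sup>2 * inner T T\<bar> \<le> \<bar>inner T T - 1\<bar>"
    proof (cases "norm T \<le> 1")
      case False
      then have "s1\<^sup>2 * inner T T = (s1 * norm T)\<^sup>2" by (simp add: power_mult_distrib power2_norm_eq_inner)
      then show ?thesis using s1 False by simp
    qed (use s1 in simp)
    have "\<bar>s2\<^sup>2 * inner lam D\<bar> = s2 * \<bar>inner lam (s2 *\<^sub>R D)\<bar>" using s2 by (simp add: power2_eq_square abs_mult)
    also have "\<dots> \<le> 1 * norm (ball_retraction c D)"
      using s2 abs_inner_lam_le[of "s2 *\<^sub>R D"] by (intro mult_mono) auto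
    finally show "\<bar>s2\<^sup>2 * inner lam D\<bar> \<le> c" using norm_ball_retraction_le[of c D] c_pos by simp
  qed (use abs_inner_lam_le[of T] c_pos in auto)
  also have "c * \<bar>inner T D\<bar> / c\<^sup>2 = \<bar>inner T D\<bar> / c" using c_pos by (simp add: power2_eq_square)
  finally show ?thesis .
qed

lemma abs_inner_perp_retraction_right:
  fixes T D :: 'a
  shows "\<bar>inner D (perp (ball_retraction 1 T) (ball_retraction c D))\<bar> \<le> norm D * (\<bar>inner D D - c\<^sup>2\<bar> / c\<^sup>2) + \<bar>inner T D\<bar>"
proof -
  obtain s1 where s1: "0 < s1" "s1 \<le> 1" "ball_retraction 1 T = s1 *\<^sub>R T"
    using ball_retraction_scaleR_cases[of 1 T] by auto
  obtain s2 where s2: "0 < s2" "s2 \<le> 1" "ball_retraction c D = s2 *\<^sub>R D" "norm D \<le> c \<Longrightarrow> s2 = 1" "norm D > c \<Longrightarrow> s2 * norm D = c"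
    using ball_retraction_scaleR_cases[of c D] c_pos by auto
  have c2: "c\<^sup>2 > 0" using c_pos by simp
  have "inner D (perp (ball_retraction 1 T) (ball_retraction c D))
      = inner lam D * (1 - s2\<^sup>2 * inner D D / c\<^sup>2) - (s1\<^sup>2 * inner lam T) * inner T D"
    unfolding perp_def s1(3) s2(3)
    by (simp add: inner_diff_right inner_commute[of D lam] inner_commute[of D T] power2_eq_square algebra_simps diff_divide_distrib)
  also have "\<bar>\<dots>\<bar> \<le> \<bar>inner lam D\<bar> * \<bar>1 - s2\<^sup>2 * inner D D / c\<^sup>2\<bar> + \<bar>s1\<^sup>2 * inner lam T\<bar> * \<bar>inner T D\<bar>"
    by (rule order_trans[OF abs_triangle_ineq4]) (simp add: abs_mult)
  also have "\<dots> \<le> norm D * (\<bar>inner D D - c\<^sup>2\<bar> / c\<^sup>2) + 1 * \<bar>inner T D\<bar>"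
  proof (intro add_mono mult_mono)
    show "\<bar>1 - s2\<^sup>2 * inner D D / c\<^sup>2\<bar> \<le> \<bar>inner D D - c\<^sup>2\<bar> / c\<^sup>2"
    proof (cases "norm D \<le> c")
      case True
      then have "1 - s2\<^sup>2 * inner D D / c\<^sup>2 = - ((inner D D - c\<^sup>2) / c\<^sup>2)" using s2 c2 by (simp add: field_simps)
      then show ?thesis using c2 by (simp add: abs_divide)
    next
      case False
      then have "s2\<^sup>2 * inner D D = (s2 * norm D)\<^sup>2" by (simp add: power_mult_distrib power2_norm_eq_inner)
      then show ?thesis using s2 False c2 by simp
    qed
    have "\<bar>s1\<^sup>2 * inner lam T\<bar> = s1 * \<bar>inner lam (s1 *\<^sub>R T)\<bar>" using s1 by (simp add: power2_eq_square abs_mult)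
    also have "\<dots> \<le> 1 * norm (ball_retraction 1 T)"
      using s1 abs_inner_lam_le[of "s1 *\<^sub>R T"] by (intro mult_mono) auto
    finally show "\<bar>s1\<^sup>2 * inner lam T\<bar> \<le> 1" using norm_ball_retraction_le[of 1 T] by simp
  qed (use abs_inner_lam_le[of D] in auto)
  finally show ?thesis by simp
qed

lemma sphere_defect_derivative_le:
  fixes T D :: 'a
  assumes T: "norm T \<le> MT" and D: "norm D \<le> MD" and B: "\<bar>B\<bar> \<le> MB"
  defines "D' \<equiv> - (c\<^sup>2) *\<^sub>R T + B *\<^sub>R perp (ball_retraction 1 T) (ball_retraction c D)"
  shows "norm (2 * inner T D, inner D D + inner T D', 2 * inner D D')
    \<le> (3 + 3 * c\<^sup>2 + MB * (MT + 1 / c + 2 * MD / c\<^sup>2 + 2)) * norm (inner T T - 1, inner T D, inner D D - c\<^sup>2)"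
proof -
  define P where "P = perp (ball_retraction 1 T) (ball_retraction c D)"
  define x where "x = inner T T - 1"
  define y where "y = inner T D"
  define w where "w = inner D D - c\<^sup>2"
  define N where "N = norm (x, y, w)"
  have xyw: "\<bar>x\<bar> \<le> N" "\<bar>y\<bar> \<le> N" "\<bar>w\<bar> \<le> N"
    unfolding N_def using norm_fst_le[of x "(y, w)"] norm_fst_le[of y w] norm_snd_le[of w y] norm_snd_le[of "(y, w)" x]
    by auto
  have nonneg: "MT \<ge> 0" "MD \<ge> 0" "MB \<ge> 0"
    using T D B by (meson abs_ge_zero norm_ge_zero order_trans)+
  have "\<bar>inner T P\<bar> \<le> norm T * \<bar>x\<bar> + \<bar>y\<bar> / c"
    unfolding P_def x_def y_def by (rule abs_inner_perp_retraction_left)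
  also have "\<dots> \<le> MT * N + N / c"
    using T xyw c_pos nonneg by (intro add_mono mult_mono divide_right_mono) auto
  finally have PT: "\<bar>inner T P\<bar> \<le> MT * N + N / c" .
  have "\<bar>inner D P\<bar> \<le> norm D * (\<bar>w\<bar> / c\<^sup>2) + \<bar>y\<bar>"
    unfolding P_def w_def y_def by (rule abs_inner_perp_retraction_right)
  also have "\<dots> \<le> MD * (N / c\<^sup>2) + N"
    using D xyw nonneg by (intro add_mono mult_mono divide_right_mono) auto
  finally have PD: "\<bar>inner D P\<bar> \<le> MD * (N / c\<^sup>2) + N" .
  have "\<bar>w - c\<^sup>2 * x + B * inner T P\<bar> \<le> \<bar>w\<bar> + \<bar>c\<^sup>2 * x\<bar> + \<bar>B * inner T P\<bar>" by arith
  then have "\<bar>w - c\<^sup>2 * x + B * inner T P\<bar> \<le> \<bar>w\<bar> + c\<^sup>2 * \<bar>x\<bar> + \<bar>B\<bar> * \<bar>inner T P\<bar>"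
    by (simp add: abs_mult)
  also have "\<dots> \<le> N + c\<^sup>2 * N + MB * (MT * N + N / c)"
    using xyw PT B nonneg by (intro add_mono mult_mono mult_left_mono) auto
  finally have b2: "\<bar>w - c\<^sup>2 * x + B * inner T P\<bar> \<le> N + c\<^sup>2 * N + MB * (MT * N + N / c)" .
  have "\<bar>2 * (- c\<^sup>2 * y + B * inner D P)\<bar> \<le> 2 * (\<bar>- c\<^sup>2 * y\<bar> + \<bar>B * inner D P\<bar>)"
    using abs_triangle_ineq[of "- c\<^sup>2 * y" "B * inner D P"] by (simp add: abs_mult)
  then have "\<bar>2 * (- c\<^sup>2 * y + B * inner D P)\<bar> \<le> 2 * (c\<^sup>2 * \<bar>y\<bar> + \<bar>B\<bar> * \<bar>inner D P\<bar>)"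
    by (simp add: abs_mult)
  also have "\<dots> \<le> 2 * (c\<^sup>2 * N + MB * (MD * (N / c\<^sup>2) + N))"
    using xyw PD B nonneg by (intro add_mono mult_mono mult_left_mono) auto
  finally have b3: "\<bar>2 * (- c\<^sup>2 * y + B * inner D P)\<bar> \<le> 2 * (c\<^sup>2 * N + MB * (MD * (N / c\<^sup>2) + N))" .
  have "inner D D + inner T D' = w - c\<^sup>2 * x + B * inner T P" "inner D D' = - c\<^sup>2 * y + B * inner D P"
    unfolding D'_def P_def x_def y_def w_def by (simp_all add: inner_add_right inner_diff_right inner_commute algebra_simps)
  then have "norm (2 * inner T D, inner D D + inner T D', 2 * inner D D')
      = norm (2 * y, w - c\<^sup>2 * x + B * inner T P, 2 * (- c\<^sup>2 * y + B * inner D P))"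
    by (simp add: y_def)
  also have "\<dots> \<le> \<bar>2 * y\<bar> + (\<bar>w - c\<^sup>2 * x + B * inner T P\<bar> + \<bar>2 * (- c\<^sup>2 * y + B * inner D P)\<bar>)"
    using norm_Pair_le[of "2 * y" "(w - c\<^sup>2 * x + B * inner T P, 2 * (- c\<^sup>2 * y + B * inner D P))"]
      norm_Pair_le[of "w - c\<^sup>2 * x + B * inner T P" "2 * (- c\<^sup>2 * y + B * inner D P)"] by simp
  also have "\<dots> \<le> 2 * N + ((N + c\<^sup>2 * N + MB * (MT * N + N / c)) + 2 * (c\<^sup>2 * N + MB * (MD * (N / c\<^sup>2) + N)))"
    using xyw(2) b2 b3 by linarith
  also have "\<dots> = (3 + 3 * c\<^sup>2 + MB * (MT + 1 / c + 2 * MD / c\<^sup>2 + 2)) * N"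
    by (simp add: algebra_simps)
  finally show ?thesis unfolding N_def x_def y_def w_def .
qed


lemma gain_bound: obtains MB where "MB \<ge> 0" "\<And>t x. t \<in> {0..L} \<Longrightarrow> \<bar>\<beta> t * gain x\<bar> \<le> MB"
proof -
  obtain MG KG where "MG \<ge> 0" "\<And>x. norm (gain x) \<le> MG"
    using bounded_lipschitzE[OF bounded_lipschitz_gain] by metis
  moreover have "\<bar>\<beta> t * gain x\<bar> \<le> Mb * MG" if "t \<in> {0..L}" for t x
    using \<beta>_bound[OF that] \<open>norm (gain x) \<le> MG\<close> by (simp add: abs_mult mult_mono)
  ultimately show ?thesis using that[of "Mb * MG"] Mb by simp
qed

lemma modified_solution_sphere:
  assumes sol: "modified_solution T D f" and t: "t \<in> {0..L}"
  shows "inner (T t) (T t) = 1" "inner (T t) (D t) = 0" "inner (D t) (D t) = c\<^sup>2"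
proof -
  define D' where "D' = (\<lambda>t. - (c\<^sup>2) *\<^sub>R T t + (\<beta> t * gain (T t, D t, f t)) *\<^sub>R perp_field (T t, D t, f t))"
  have T: "bounded_primitive L T D" and D: "bounded_primitive L D D'"
    using modified_solution_components[OF sol] unfolding D'_def by blast+
  obtain MT where MT: "\<And>t. t \<in> {0..L} \<Longrightarrow> norm (T t) \<le> MT"
    using continuous_on_compact_bound[OF compact_Icc bounded_primitive_continuous_on[OF T]] by blast
  obtain MD where MD: "\<And>t. t \<in> {0..L} \<Longrightarrow> norm (D t) \<le> MD"
    using continuous_on_compact_bound[OF compact_Icc bounded_primitive_continuous_on[OF D]] by blast
  obtain MB where MB: "MB \<ge> 0" "\<And>t x. t \<in> {0..L} \<Longrightarrow> \<bar>\<beta> t * gain x\<bar> \<le> MB"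
    using gain_bound by blast
  have "MT \<ge> 0" "MD \<ge> 0" using MT[OF t0] MD[OF t0] by (meson norm_ge_zero order_trans)+
  define Q where "Q = (\<lambda>t. (inner (T t) (T t) - 1, inner (T t) (D t), inner (D t) (D t) - c\<^sup>2))"
  define q where "q = (\<lambda>t. (2 * inner (T t) (D t), inner (D t) (D t) + inner (T t) (D' t), 2 * inner (D t) (D' t)))"
  have "bounded_primitive L Q q"
    by (rule bounded_primitive_cong[OF bounded_primitive_Pair[OF bounded_primitive_diff[OF bounded_primitive_inner[OF T T]]
          bounded_primitive_Pair[OF bounded_primitive_inner[OF T D] bounded_primitive_diff[OF bounded_primitive_inner[OF D D]]]]])
       (auto simp: Q_def q_def inner_commute intro: bounded_primitive_const)
  moreover have "norm (q s) \<le> (3 + 3 * c\<^sup>2 + MB * (MT + 1 / c + 2 * MD / c\<^sup>2 + 2)) * norm (Q s)"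
    if "s \<in> {0..L}" for s
    unfolding q_def Q_def D'_def perp_field_def
    using sphere_defect_derivative_le[OF MT[OF that] MD[OF that] MB(2)[OF that]] by simp
  moreover have "Q t0 = 0"
    using sol \<tau>0 orth unfolding Q_def modified_solution_def
    by (simp add: c_def power2_norm_eq_inner[symmetric] zero_prod_def)
  moreover have "0 \<le> 3 + 3 * c\<^sup>2 + MB * (MT + 1 / c + 2 * MD / c\<^sup>2 + 2)"
    using \<open>MT \<ge> 0\<close> \<open>MD \<ge> 0\<close> MB(1) c_pos by (intro add_nonneg_nonneg mult_nonneg_nonneg) auto
  ultimately have "Q t = 0" using gronwall_bounded_primitive_eq_0 t0 t by blast
  then show "inner (T t) (T t) = 1" "inner (T t) (D t) = 0" "inner (D t) (D t) = c\<^sup>2"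
    by (simp_all add: Q_def zero_prod_def)
qed


lemma abs_le_f_max:
  assumes "bounded_primitive L f f'" "\<And>t. t \<in> {0..L} \<Longrightarrow> \<bar>f' t\<bar> \<le> Mb * c" "f t0 = f0" "t \<in> {0..L}"
  shows "\<bar>f t\<bar> \<le> f_max"
proof -
  have "\<bar>f t - f t0\<bar> \<le> Mb * c * \<bar>t - t0\<bar>"
    using bounded_primitive_norm_diff_le_uniform[OF assms(1) _ t0 assms(4)] assms(2) by simp
  also have "\<dots> \<le> Mb * c * L" using assms(4) t0 Mb c_pos by (intro mult_left_mono) auto
  finally show ?thesis using assms(3) f0 unfolding f_max_def by linarith
qed

lemma abs_beta_inner_lam_le:
  assumes "t \<in> {0..L}" "norm v \<le> c"
  shows "\<bar>\<beta> t * inner lam v\<bar> \<le> Mb * c"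
proof -
  have "\<bar>inner lam v\<bar> \<le> c" using abs_inner_lam_le[of v] assms(2) by linarith
  then show ?thesis using \<beta>_bound[OF assms(1)] Mb unfolding abs_mult by (intro mult_mono) auto
qed

lemma bounded_primitive_invariant:
  assumes T: "bounded_primitive L T V" and V: "bounded_primitive L V G" and f: "bounded_primitive L f f'"
  shows "bounded_primitive L (\<lambda>t. f t * f t * perp_sq (T t) (V t))
    (\<lambda>t. 2 * f t * (f' t * perp_sq (T t) (V t) - f t * inner lam (V t) * (inner lam (T t) + inner lam (G t) / c\<^sup>2)))"
proof -
  have \<alpha>: "bounded_primitive L (\<lambda>t. inner lam (T t)) (\<lambda>t. inner lam (V t))"
    and \<gamma>: "bounded_primitive L (\<lambda>t. inner lam (V t)) (\<lambda>t. inner lam (G t))"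
    using bounded_primitive_linear[OF bounded_linear_inner_right T] bounded_primitive_linear[OF bounded_linear_inner_right V] .
  note mult = bounded_primitive_bilinear[OF bounded_bilinear_mult]
  from mult[OF mult[OF f f] bounded_primitive_diff[OF bounded_primitive_diff[OF bounded_primitive_const[of _ 1] mult[OF \<alpha> \<alpha>]]
      bounded_primitive_linear[OF bounded_linear_mult_right[of "1 / c\<^sup>2"] mult[OF \<gamma> \<gamma>]]]]
  show ?thesis
    by (rule bounded_primitive_cong) (use c_pos in \<open>simp_all add: perp_sq_def power2_eq_square field_simps\<close>)
qed

lemma modified_solution_abs_le_f_max:
  assumes sol: "modified_solution T D f" and t: "t \<in> {0..L}"
  shows "\<bar>f t\<bar> \<le> f_max"
proof (rule abs_le_f_max[OF modified_solution_components(3)[OF sol] _ _ t])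
  show "\<bar>\<beta> s * inner lam (ball_retraction c (D s))\<bar> \<le> Mb * c" if "s \<in> {0..L}" for s
    using abs_beta_inner_lam_le[OF that norm_ball_retraction_le] c_pos by simp
  show "f t0 = f0" using sol by (simp add: modified_solution_def)
qed

lemma modified_solution_conserved:
  assumes sol: "modified_solution T D f" and t: "t \<in> {0..L}"
  shows "(f t)\<^sup>2 * perp_sq (T t) (D t) = k2"
proof -
  define D' where "D' = (\<lambda>t. - (c\<^sup>2) *\<^sub>R T t + (\<beta> t * gain (T t, D t, f t)) *\<^sub>R perp_field (T t, D t, f t))"
  define f' where "f' = (\<lambda>t. \<beta> t * inner lam (ball_retraction c (D t)))"
  have T: "bounded_primitive L T D" and D: "bounded_primitive L D D'" and f: "bounded_primitive L f f'"
    using modified_solution_components[OF sol] unfolding D'_def f'_def by blast+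
  have sphere: "norm (T s) = 1" "norm (D s) = c" "inner (T s) (D s) = 0" if "s \<in> {0..L}" for s
    using modified_solution_sphere[OF sol that] c_pos by (simp_all add: norm_eq_sqrt_inner)
  then have P: "perp_field (T s, D s, f s) = perp (T s) (D s)" and f's: "f' s = \<beta> s * inner lam (D s)"
    if "s \<in> {0..L}" for s
    using that by (simp_all add: perp_field_def f'_def ball_retraction_id)
  have f_max: "\<bar>f s\<bar> \<le> f_max" if "s \<in> {0..L}" for s
    using modified_solution_abs_le_f_max[OF sol that] .
  define \<alpha> where "\<alpha> = (\<lambda>t. inner lam (T t))"
  define \<gamma> where "\<gamma> = (\<lambda>t. inner lam (D t))"
  define \<pi> where "\<pi> = (\<lambda>t. perp_sq (T t) (D t))"
  have perp_sq: "inner (perp (T s) (D s)) (perp (T s) (D s)) = \<pi> s" "inner lam (perp (T s) (D s)) = \<pi> s"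
    if "s \<in> {0..L}" for s
    using inner_perp_perp modified_solution_sphere[OF sol that] by (simp_all add: \<pi>_def)
  have gain: "gain (T s, D s, f s) = c\<^sup>2 * f s * \<pi> s / k2" if "s \<in> {0..L}" for s
    using that f_max perp_sq unfolding gain_def by (simp add: P ball_retraction_id)
  have \<gamma>': "inner lam (D' s) = - (c\<^sup>2) * \<alpha> s + \<beta> s * (c\<^sup>2 * f s * \<pi> s / k2) * \<pi> s" if "s \<in> {0..L}" for s
    using that gain perp_sq unfolding D'_def \<alpha>_def by (simp add: P inner_add_right inner_diff_right)
  define E where "E = (\<lambda>t. f t * f t * \<pi> t - k2)"
  have "bounded_primitive L E (\<lambda>t. 2 * f t * (f' t * \<pi> t - f t * \<gamma> t * (\<alpha> t + inner lam (D' t) / c\<^sup>2)) - 0)"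
    unfolding E_def \<pi>_def \<alpha>_def \<gamma>_def by (intro bounded_primitive_diff bounded_primitive_const bounded_primitive_invariant T D f)
  then have E: "bounded_primitive L E (\<lambda>t. - (2 * f t * \<beta> t * \<gamma> t * \<pi> t / k2) * E t)"
    by (rule bounded_primitive_cong)
       (use c_pos k2_pos in \<open>simp_all add: E_def f's \<gamma>' \<gamma>_def field_simps power2_eq_square\<close>)
  have coefficient: "\<bar>2 * f s * \<beta> s * \<gamma> s * \<pi> s / k2\<bar> \<le> 2 * f_max * Mb * c / k2" if s: "s \<in> {0..L}" for s
  proof -
    have "0 \<le> \<pi> s" using perp_sq(1)[OF s] by (metis inner_ge_zero)
    moreover have "0 \<le> (inner lam (D s))\<^sup>2 / c\<^sup>2" by simp
    then have "\<pi> s \<le> 1" unfolding \<pi>_def perp_sq_def using zero_le_power2[of "inner lam (T s)"] by linarith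
    moreover have "\<bar>\<gamma> s\<bar> \<le> c" using abs_inner_lam_le[of "D s"] sphere(2)[OF s] by (simp add: \<gamma>_def)
    ultimately have "\<bar>f s\<bar> * \<bar>\<beta> s\<bar> * \<bar>\<gamma> s\<bar> * \<pi> s \<le> f_max * Mb * c * 1"
      using f_max[OF s] \<beta>_bound[OF s] f_max_pos Mb c_pos by (intro mult_mono) auto
    then show ?thesis using k2_pos \<open>0 \<le> \<pi> s\<close> by (simp add: abs_mult abs_divide divide_right_mono)
  qed
  have "E t = 0"
  proof (rule gronwall_bounded_primitive_eq_0[OF E _ _ t0 _ t])
    show "0 \<le> 2 * f_max * Mb * c / k2" using f_max_pos Mb c_pos k2_pos by simp
    show "norm (- (2 * f s * \<beta> s * \<gamma> s * \<pi> s / k2) * E s) \<le> 2 * f_max * Mb * c / k2 * norm (E s)"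
      if "s \<in> {0..L}" for s
      using mult_right_mono[OF coefficient[OF that] abs_ge_zero[of "E s"]] by (simp add: abs_mult)
    show "E t0 = 0" using sol by (simp add: modified_solution_def E_def \<pi>_def k2_def power2_eq_square)
  qed
  then show ?thesis by (simp add: E_def \<pi>_def power2_eq_square)
qed


lemma modified_solution_pos:
  assumes sol: "modified_solution T D f" and t: "t \<in> {0..L}"
  shows "f t > 0"
proof (rule continuous_on_pos_if_nonzero[OF _ _ t0 _ t])
  show "continuous_on {0..L} f"
    using modified_solution_components(3)[OF sol] by (rule bounded_primitive_continuous_on)
  show "f s \<noteq> 0" if "s \<in> {0..L}" for s
    using modified_solution_conserved[OF sol that] k2_pos by auto
  show "f t0 > 0" using sol f0 by (simp add: modified_solution_def)
qed

lemma modified_solution_in_span: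
  assumes sol: "modified_solution T D f" and t: "t \<in> {0..L}"
  shows "T t \<in> span {\<tau>0, \<tau>1, lam}"
proof -
  define B where "B = (\<lambda>t. \<beta> t * gain (T t, D t, f t))"
  define D' where "D' = (\<lambda>t. - (c\<^sup>2) *\<^sub>R T t + B t *\<^sub>R perp (T t) (D t))"
  have sphere: "norm (T s) = 1" "norm (D s) = c" if "s \<in> {0..L}" for s
    using modified_solution_sphere[OF sol that] c_pos by (simp_all add: norm_eq_sqrt_inner)
  have T: "bounded_primitive L T D" using modified_solution_components(1)[OF sol] .
  have D: "bounded_primitive L D D'"
    by (rule bounded_primitive_cong[OF modified_solution_components(2)[OF sol]])
       (simp_all add: D'_def B_def perp_field_def ball_retraction_id sphere)
  obtain MB where "MB \<ge> 0" "\<And>t x. t \<in> {0..L} \<Longrightarrow> \<bar>\<beta> t * gain x\<bar> \<le> MB"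
    using gain_bound by blast
  then have MB: "MB \<ge> 0" "\<And>t. t \<in> {0..L} \<Longrightarrow> \<bar>B t\<bar> \<le> MB" by (simp_all add: B_def)
  obtain y z where yz: "y \<in> span {\<tau>0, \<tau>1, lam}" "\<And>w. w \<in> span {\<tau>0, \<tau>1, lam} \<Longrightarrow> orthogonal z w" "T t = y + z"
    using orthogonal_subspace_decomp_exists by blast
  have z: "inner z \<tau>0 = 0" "inner z \<tau>1 = 0" "inner z lam = 0"
    using yz(2)[of \<tau>0] yz(2)[of \<tau>1] yz(2)[of lam] by (auto simp: orthogonal_def span_base)
  define G where "G = (\<lambda>s. (inner z (T s), inner z (D s)))"
  have G: "bounded_primitive L G (\<lambda>s. (inner z (D s), inner z (D' s)))"
    unfolding G_def
    by (rule bounded_primitive_Pair[OF bounded_primitive_linear[OF bounded_linear_inner_right T]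
          bounded_primitive_linear[OF bounded_linear_inner_right D]])
  define K where "K = 1 + c\<^sup>2 + MB * (1 + 1 / c)"
  have "norm (inner z (D s), inner z (D' s)) \<le> K * norm (G s)" if s: "s \<in> {0..L}" for s
  proof -
    define N where "N = norm (G s)"
    have g: "\<bar>inner z (T s)\<bar> \<le> N" "\<bar>inner z (D s)\<bar> \<le> N"
      unfolding N_def G_def using norm_fst_le norm_snd_le by (metis real_norm_def)+
    have "\<bar>inner z (perp (T s) (D s))\<bar> = \<bar>inner lam (T s) * inner z (T s) + (inner lam (D s) / c\<^sup>2) * inner z (D s)\<bar>"
      unfolding perp_def using z by (simp add: inner_diff_right abs_minus_commute)
    also have "\<dots> \<le> \<bar>inner lam (T s)\<bar> * \<bar>inner z (T s)\<bar> + (\<bar>inner lam (D s)\<bar> / c\<^sup>2) * \<bar>inner z (D s)\<bar>"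
      by (rule order_trans[OF abs_triangle_ineq]) (simp add: abs_mult abs_divide)
    also have "\<dots> \<le> 1 * N + (c / c\<^sup>2) * N"
      using abs_inner_lam_le[of "T s"] abs_inner_lam_le[of "D s"] sphere[OF s] g c_pos
      by (intro add_mono mult_mono divide_right_mono) auto
    also have "\<dots> = N + N / c" using c_pos by (simp add: power2_eq_square)
    finally have zP: "\<bar>inner z (perp (T s) (D s))\<bar> \<le> N + N / c" .
    have "norm (inner z (D s), inner z (D' s)) \<le> \<bar>inner z (D s)\<bar> + (c\<^sup>2 * \<bar>inner z (T s)\<bar> + \<bar>B s\<bar> * \<bar>inner z (perp (T s) (D s))\<bar>)"
      using norm_Pair_le[of "inner z (D s)" "inner z (D' s)"] abs_triangle_ineq[of "- c\<^sup>2 * inner z (T s)" "B s * inner z (perp (T s) (D s))"]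
      unfolding D'_def by (simp add: inner_add_right inner_diff_right abs_mult)
    also have "\<dots> \<le> N + (c\<^sup>2 * N + MB * (N + N / c))"
      using g MB(1) MB(2)[OF s] zP by (intro add_mono mult_mono mult_left_mono) auto
    also have "\<dots> = K * N" unfolding K_def by (simp add: algebra_simps)
    finally show ?thesis unfolding N_def .
  qed
  moreover have "0 \<le> K" unfolding K_def using MB c_pos by simp
  moreover have "G t0 = 0" using sol z by (simp add: G_def modified_solution_def zero_prod_def)
  ultimately have "G t = 0" using gronwall_bounded_primitive_eq_0[OF G] t0 t by blast
  then have "inner z z = 0"
    using yz(2)[OF yz(1)] yz(3) by (simp add: G_def zero_prod_def orthogonal_def inner_add_right inner_commute)
  then show ?thesis using yz by simp
qed


section \<open>Caratheodory solutions\<close>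

definition tangent_rhs :: "real \<Rightarrow> 'a \<Rightarrow> 'a \<Rightarrow> real \<Rightarrow> 'a" where
  "tangent_rhs t T D f = (\<beta> t * inverse f * (norm D)\<^sup>2) *\<^sub>R proj_perp T D lam - (norm D)\<^sup>2 *\<^sub>R T"

definition f_rhs :: "real \<Rightarrow> 'a \<Rightarrow> real" where
  "f_rhs t D = \<beta> t * (lam \<bullet> D)"

definition velocity :: "(real \<Rightarrow> 'a) \<Rightarrow> real \<Rightarrow> 'a" where
  "velocity T t = vector_derivative T (at t within {0..L})"

lemma caratheodory_solution_iff:
  "caratheodory_solution \<beta> lam L t0 \<tau>0 \<tau>1 f0 T f \<longleftrightarrow>
     (\<forall>t\<in>{0..L}. T differentiable (at t within {0..L})) \<and>
     (let V = velocity T in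
       (\<lambda>t. tangent_rhs t (T t) (V t) (f t)) absolutely_integrable_on {0..L} \<and>
       (\<lambda>t. f_rhs t (V t)) absolutely_integrable_on {0..L} \<and>
       (\<forall>s\<in>{0..L}. \<forall>t\<in>{0..L}. s \<le> t \<longrightarrow>
          ((\<lambda>t. tangent_rhs t (T t) (V t) (f t)) has_integral (V t - V s)) {s..t} \<and>
          ((\<lambda>t. f_rhs t (V t)) has_integral (f t - f s)) {s..t}) \<and>
       T t0 = \<tau>0 \<and> V t0 = \<tau>1 \<and> f t0 = f0 \<and> (\<forall>t\<in>{0..L}. norm (T t) = 1 \<and> f t > 0))"
  unfolding caratheodory_solution_def tangent_rhs_def f_rhs_def velocity_def[abs_def] Let_def ..

lemma field_eq_rhs:
  assumes "inner T T = 1" "inner T D = 0" "inner D D = c\<^sup>2" "f\<^sup>2 * perp_sq T D = k2" "f > 0" "\<bar>f\<bar> \<le> f_max"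
  shows "field t (T, D, f) = (D, tangent_rhs t T D f, f_rhs t D)"
proof -
  have norms: "norm T = 1" "norm D = c" using assms(1,3) c_pos by (simp_all add: norm_eq_sqrt_inner)
  then have P: "perp_field (T, D, f) = perp T D"
    by (simp add: perp_field_def ball_retraction_id)
  have "D \<noteq> 0" using norms c_pos by auto
  then have "proj_perp T D lam = perp T D"
    unfolding perp_def using proj_perp_orthogonal_pair[OF assms(1,2), of lam] assms(3)
    by (simp add: inner_commute)
  moreover have "gain (T, D, f) = c\<^sup>2 * inverse f"
    using assms inner_perp_perp(1)[OF assms(1-3)] k2_pos
    by (simp add: gain_def P ball_retraction_id field_simps power2_eq_square)
  ultimately show ?thesis
    using norms by (simp add: field_def linear_part_def forcing_def P tangent_rhs_def f_rhs_def ball_retraction_id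
        algebra_simps)
qed

lemma modified_solution_has_vector_derivative:
  assumes sol: "modified_solution T D f" and t: "t \<in> {0..L}"
  shows "(T has_vector_derivative D t) (at t within {0..L})"
    and "vector_derivative T (at t within {0..L}) = D t"
proof -
  have "continuous_on {0..L} D"
    by (rule bounded_primitive_continuous_on[OF modified_solution_components(2)[OF sol]])
  then show vd: "(T has_vector_derivative D t) (at t within {0..L})"
    by (rule bounded_primitive_has_vector_derivative[OF modified_solution_components(1)[OF sol] _ t])
  show "vector_derivative T (at t within {0..L}) = D t"
    by (rule vector_derivative_within_closed_interval[OF L t vd])
qed

lemma caratheodory_solution_of_modified:
  assumes sol: "modified_solution T D f"
  shows "caratheodory_solution \<beta> lam L t0 \<tau>0 \<tau>1 f0 T f"
proof -
  define V where "V = velocity T"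
  have V: "V s = D s" if "s \<in> {0..L}" for s
    using modified_solution_has_vector_derivative(2)[OF sol that] by (simp add: V_def velocity_def)
  have rhs: "field s (T s, D s, f s) = (D s, tangent_rhs s (T s) (D s) (f s), f_rhs s (D s))" if "s \<in> {0..L}" for s
    using modified_solution_sphere[OF sol that] modified_solution_conserved[OF sol that]
      modified_solution_pos[OF sol that] modified_solution_abs_le_f_max[OF sol that]
    by (intro field_eq_rhs) auto
  have "bounded_primitive L (\<lambda>t. (T t, V t, f t)) (\<lambda>t. (V t, tangent_rhs t (T t) (V t) (f t), f_rhs t (V t)))"
    by (rule bounded_primitive_cong[OF sol[unfolded modified_solution_def, THEN conjunct1]]) (simp_all add: V rhs)
  then have "bounded_primitive L V (\<lambda>t. tangent_rhs t (T t) (V t) (f t))"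
    and "bounded_primitive L f (\<lambda>t. f_rhs t (V t))"
    by (auto dest: bounded_primitive_fst bounded_primitive_snd)
  moreover have "T differentiable (at t within {0..L})" if "t \<in> {0..L}" for t
    using modified_solution_has_vector_derivative(1)[OF sol that] by (auto simp: differentiable_def has_vector_derivative_def)
  moreover have "norm (T t) = 1" "f t > 0" if "t \<in> {0..L}" for t
    using modified_solution_sphere(1)[OF sol that] modified_solution_pos[OF sol that] by (simp_all add: norm_eq_sqrt_inner)
  ultimately show ?thesis
    using sol V[OF t0] unfolding caratheodory_solution_iff Let_def V_def[symmetric] modified_solution_def
    by (auto intro: bounded_primitive_absolutely_integrable_on bounded_primitive_has_integral)
qed


lemma norm_tangent_rhs_le:
  assumes "t \<in> {0..L}" "norm T = 1" "norm D \<le> MD" "f \<ge> fm" "fm > 0"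
  shows "norm (tangent_rhs t T D f) \<le> Mb / fm * MD\<^sup>2 + MD\<^sup>2"
proof -
  have "norm (tangent_rhs t T D f) \<le> \<bar>\<beta> t\<bar> * inverse f * (norm D)\<^sup>2 * norm (proj_perp T D lam) + (norm D)\<^sup>2 * norm T"
    unfolding tangent_rhs_def using assms(4,5) by (rule_tac order_trans[OF norm_triangle_ineq4]) (simp add: abs_mult)
  also have "\<dots> \<le> Mb * inverse fm * MD\<^sup>2 * 1 + MD\<^sup>2 * 1"
    using assms \<beta>_bound[OF assms(1)] norm_proj_perp_le[of T D lam] lam Mb
    by (intro add_mono mult_mono power_mono le_imp_inverse_le) auto
  finally show ?thesis by (simp add: divide_inverse)
qed

lemma caratheodory_solution_primitives:
  assumes sol: "caratheodory_solution \<beta> lam L t0 \<tau>0 \<tau>1 f0 T f"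
  shows "bounded_primitive L T (velocity T)"
    "bounded_primitive L (velocity T) (\<lambda>t. tangent_rhs t (T t) (velocity T t) (f t))"
    "bounded_primitive L f (\<lambda>t. f_rhs t (velocity T t))"
proof -
  define V where "V = velocity T"
  define G where "G = (\<lambda>t. tangent_rhs t (T t) (V t) (f t))"
  define H where "H = (\<lambda>t. f_rhs t (V t))"
  have diff: "\<And>t. t \<in> {0..L} \<Longrightarrow> T differentiable (at t within {0..L})"
    and G: "G absolutely_integrable_on {0..L}" and H: "H absolutely_integrable_on {0..L}"
    and ints: "\<And>s t. s \<in> {0..L} \<Longrightarrow> t \<in> {0..L} \<Longrightarrow> s \<le> t \<Longrightarrow>
                 (G has_integral (V t - V s)) {s..t} \<and> (H has_integral (f t - f s)) {s..t}"
    and pos: "\<And>t. t \<in> {0..L} \<Longrightarrow> norm (T t) = 1 \<and> f t > 0"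
    using sol unfolding caratheodory_solution_iff Let_def V_def[symmetric] G_def[symmetric] H_def[symmetric]
    by auto
  have "G integrable_on {0..L}" "H integrable_on {0..L}"
    using G H by (simp_all add: absolutely_integrable_on_def)
  then have cV: "continuous_on {0..L} V" and cf: "continuous_on {0..L} f"
    using ints L by (auto intro: continuous_on_if_has_integral)
  obtain MD where MD: "\<And>t. t \<in> {0..L} \<Longrightarrow> norm (V t) \<le> MD"
    using continuous_on_compact_bound[OF compact_Icc cV] by blast
  obtain tm where tm: "tm \<in> {0..L}" "\<And>t. t \<in> {0..L} \<Longrightarrow> f tm \<le> f t"
    using continuous_attains_inf[OF compact_Icc _ cf] L by auto
  have "{0..L} \<in> sets lebesgue" by simp
  from absolutely_integrable_measurable[OF this] G H
  have measurable: "G \<in> borel_measurable (lebesgue_on {0..L})" "H \<in> borel_measurable (lebesgue_on {0..L})"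
    by blast+
  have "norm (G t) \<le> Mb / f tm * MD\<^sup>2 + MD\<^sup>2" if "t \<in> {0..L}" for t
    unfolding G_def using norm_tangent_rhs_le[OF that] pos MD tm that by blast
  with measurable(1) show "bounded_primitive L (velocity T) (\<lambda>t. tangent_rhs t (T t) (velocity T t) (f t))"
    unfolding V_def[symmetric] G_def[symmetric]
    using ints by (intro bounded_primitiveI) auto
  have "norm (H t) \<le> Mb * MD" if "t \<in> {0..L}" for t
    unfolding H_def f_rhs_def using \<beta>_bound[OF that] abs_inner_lam_le[of "V t"] MD[OF that]
    by (simp add: abs_mult mult_mono order_trans)
  with measurable(2) show "bounded_primitive L f (\<lambda>t. f_rhs t (velocity T t))"
    unfolding V_def[symmetric] H_def[symmetric]
    using ints by (intro bounded_primitiveI) auto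
  have vd: "(T has_vector_derivative V t) (at t within {0..L})" if "t \<in> {0..L}" for t
    unfolding V_def velocity_def using diff[OF that] vector_derivative_works by blast
  have "(V has_integral (T t - T s)) {s..t}" if "0 \<le> s" "s \<le> t" "t \<le> L" for s t
    by (rule fundamental_theorem_of_calculus[OF that(2)])
       (use vd that in \<open>auto intro: has_vector_derivative_within_subset[of T _ _ "{0..L}"]\<close>)
  then show "bounded_primitive L T (velocity T)"
    unfolding V_def[symmetric]
    by (rule bounded_primitiveI[OF _ continuous_imp_measurable_on_sets_lebesgue[OF cV] MD]) auto
qed


lemma caratheodory_solution_sphere:
  assumes sol: "caratheodory_solution \<beta> lam L t0 \<tau>0 \<tau>1 f0 T f" and t: "t \<in> {0..L}"
  shows "inner (T t) (T t) = 1" "inner (T t) (velocity T t) = 0" "inner (velocity T t) (velocity T t) = c\<^sup>2"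
proof -
  define V where "V = velocity T"
  have T: "bounded_primitive L T V" and V: "bounded_primitive L V (\<lambda>t. tangent_rhs t (T t) (V t) (f t))"
    using caratheodory_solution_primitives[OF sol] unfolding V_def by blast+
  have init: "V t0 = \<tau>1" and TT: "\<And>t. t \<in> {0..L} \<Longrightarrow> inner (T t) (T t) = 1"
    using sol unfolding caratheodory_solution_iff Let_def V_def[symmetric]
    by (auto simp: power2_norm_eq_inner[symmetric])
  show "inner (T t) (T t) = 1" using TT t .
  have TV: "inner (T s) (V s) = 0" if s: "s \<in> {0..L}" for s
  proof -
    have vd: "(T has_vector_derivative V s) (at s within {0..L})"
      using bounded_primitive_has_vector_derivative[OF T bounded_primitive_continuous_on[OF V] s] .
    have "((\<lambda>s. inner (T s) (T s)) has_vector_derivative (inner (T s) (V s) + inner (V s) (T s))) (at s within {0..L})"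
      by (rule bounded_bilinear.has_vector_derivative[OF bounded_bilinear_inner vd vd])
    moreover have "((\<lambda>s. inner (T s) (T s)) has_vector_derivative 0) (at s within {0..L})"
      by (rule has_vector_derivative_transform[OF s _ has_vector_derivative_const[of 1]]) (use TT in auto)
    ultimately have "inner (T s) (V s) + inner (V s) (T s) = 0"
      using vector_derivative_within_closed_interval[OF L s] by metis
    then show ?thesis by (simp add: inner_commute)
  qed
  then show "inner (T t) (velocity T t) = 0" using t by (simp add: V_def)
  have "inner (V s) (tangent_rhs s (T s) (V s) (f s)) = 0" if "s \<in> {0..L}" for s
    using TV[OF that] inner_proj_perp_eq_0(2)[of "T s" "V s" lam]
    by (simp add: tangent_rhs_def inner_diff_right inner_commute)
  then have "bounded_primitive L (\<lambda>t. inner (V t) (V t)) (\<lambda>t. 0)"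
    by (intro bounded_primitive_cong[OF bounded_primitive_inner[OF V V]]) (simp_all add: inner_commute)
  from bounded_primitive_const_if_deriv_zero[OF this t0 t]
  show "inner (velocity T t) (velocity T t) = c\<^sup>2" using init by (simp add: V_def c_def power2_norm_eq_inner)
qed

lemma caratheodory_solution_conserved:
  assumes sol: "caratheodory_solution \<beta> lam L t0 \<tau>0 \<tau>1 f0 T f" and t: "t \<in> {0..L}"
  shows "(f t)\<^sup>2 * perp_sq (T t) (velocity T t) = k2"
proof -
  define V where "V = velocity T"
  define G where "G = (\<lambda>t. tangent_rhs t (T t) (V t) (f t))"
  have T: "bounded_primitive L T V" and V: "bounded_primitive L V G" and f: "bounded_primitive L f (\<lambda>t. f_rhs t (V t))"
    using caratheodory_solution_primitives[OF sol] unfolding V_def G_def by blast+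
  have init: "T t0 = \<tau>0" "V t0 = \<tau>1" "f t0 = f0" and pos: "\<And>t. t \<in> {0..L} \<Longrightarrow> f t > 0"
    using sol unfolding caratheodory_solution_iff Let_def V_def[symmetric] by auto
  define \<alpha> where "\<alpha> = (\<lambda>t. inner lam (T t))"
  define \<gamma> where "\<gamma> = (\<lambda>t. inner lam (V t))"
  define \<pi> where "\<pi> = (\<lambda>t. perp_sq (T t) (V t))"
  have \<gamma>': "inner lam (G s) = - (c\<^sup>2) * \<alpha> s + (\<beta> s * c\<^sup>2 / f s) * \<pi> s" if s: "s \<in> {0..L}" for s
  proof -
    note sphere = caratheodory_solution_sphere[OF sol s, folded V_def]
    have "V s \<noteq> 0" "norm (V s) = c" using sphere(3) c_pos by (auto simp: norm_eq_sqrt_inner)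
    then have "proj_perp (T s) (V s) lam = perp (T s) (V s)"
      unfolding perp_def using proj_perp_orthogonal_pair[OF sphere(1,2), of lam] sphere(3) by (simp add: inner_commute)
    then show ?thesis
      using inner_perp_perp(2)[OF sphere] \<open>norm (V s) = c\<close> unfolding G_def tangent_rhs_def \<alpha>_def \<pi>_def
      by (simp add: inner_diff_right divide_inverse)
  qed
  have "bounded_primitive L (\<lambda>t. f t * f t * \<pi> t)
      (\<lambda>t. 2 * f t * (f_rhs t (V t) * \<pi> t - f t * \<gamma> t * (\<alpha> t + inner lam (G t) / c\<^sup>2)))"
    unfolding \<pi>_def \<alpha>_def \<gamma>_def by (rule bounded_primitive_invariant[OF T V f])
  then have "bounded_primitive L (\<lambda>t. f t * f t * \<pi> t) (\<lambda>t. 0)"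
    by (rule bounded_primitive_cong)
       (use c_pos pos in \<open>simp_all add: f_rhs_def \<gamma>' \<gamma>_def field_simps power2_eq_square\<close>)
  from bounded_primitive_const_if_deriv_zero[OF this t0 t]
  show ?thesis using init by (simp add: \<pi>_def V_def k2_def power2_eq_square)
qed

lemma modified_solution_of_caratheodory:
  assumes sol: "caratheodory_solution \<beta> lam L t0 \<tau>0 \<tau>1 f0 T f"
  shows "modified_solution T (velocity T) f"
proof -
  define V where "V = velocity T"
  have T: "bounded_primitive L T V" and V: "bounded_primitive L V (\<lambda>t. tangent_rhs t (T t) (V t) (f t))"
    and f: "bounded_primitive L f (\<lambda>t. f_rhs t (V t))"
    using caratheodory_solution_primitives[OF sol] unfolding V_def by blast+
  have init: "T t0 = \<tau>0" "V t0 = \<tau>1" "f t0 = f0" and pos: "\<And>t. t \<in> {0..L} \<Longrightarrow> f t > 0"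
    using sol unfolding caratheodory_solution_iff Let_def V_def[symmetric] by auto
  note sphere = caratheodory_solution_sphere[OF sol, folded V_def]
  have "\<bar>f_rhs t (V t)\<bar> \<le> Mb * c" if "t \<in> {0..L}" for t
    using abs_beta_inner_lam_le[OF that] sphere(3)[OF that] c_pos by (simp add: f_rhs_def norm_eq_sqrt_inner)
  then have f_max: "\<bar>f t\<bar> \<le> f_max" if "t \<in> {0..L}" for t
    using abs_le_f_max[OF f _ init(3) that] by blast
  have "bounded_primitive L (\<lambda>t. (T t, V t, f t)) (\<lambda>t. field t (T t, V t, f t))"
    by (rule bounded_primitive_cong[OF bounded_primitive_Pair[OF T bounded_primitive_Pair[OF V f]]])
       (simp_all add: field_eq_rhs sphere caratheodory_solution_conserved[OF sol, folded V_def] pos f_max)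
  then show ?thesis using init by (simp add: V_def modified_solution_def)
qed


lemma modified_solution_properties:
  assumes sol: "modified_solution T D f" and t: "t \<in> {0..L}"
  shows "norm (velocity T t) = norm \<tau>1" "lam \<bullet> T t \<noteq> 1" "lam \<bullet> T t \<noteq> -1" "T t \<in> span {\<tau>0, \<tau>1, lam}"
proof -
  show "norm (velocity T t) = norm \<tau>1"
    using modified_solution_has_vector_derivative(2)[OF sol t] modified_solution_sphere(3)[OF sol t]
    by (simp add: velocity_def c_def norm_eq_sqrt_inner)
  have "(f t)\<^sup>2 * perp_sq (T t) (D t) > 0" using modified_solution_conserved[OF sol t] k2_pos by simp
  then have "perp_sq (T t) (D t) > 0" by (simp add: zero_less_mult_iff)
  then have "(lam \<bullet> T t)\<^sup>2 < 1" unfolding perp_sq_def by (smt (verit) divide_nonneg_nonneg zero_le_power2)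
  then show "lam \<bullet> T t \<noteq> 1" "lam \<bullet> T t \<noteq> -1" by auto
  show "T t \<in> span {\<tau>0, \<tau>1, lam}" by (rule modified_solution_in_span[OF sol t])
qed

end

theorem mainTheorem12:
  fixes \<beta> :: "real \<Rightarrow> real" and L t0 f0 :: real and lam \<tau>0 \<tau>1 :: "'a::euclidean_space"
  assumes "L > 0"
    and "bounded_variation_on \<beta> 0 L"
    and "\<exists>m M. 0 < m \<and> (\<forall>t\<in>{0..L}. m \<le> \<beta> t \<and> \<beta> t \<le> M)"
    and "norm lam = 1" and "norm \<tau>0 = 1" and "\<tau>0 \<bullet> \<tau>1 = 0"
    and "f0 > 0" and "t0 \<in> {0..L}"
    and "\<forall>a b c::real. a *\<^sub>R \<tau>0 + b *\<^sub>R \<tau>1 + c *\<^sub>R lam = 0 \<longrightarrow> a = 0 \<and> b = 0 \<and> c = 0"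
  shows "(\<exists>\<tau> f. caratheodory_solution \<beta> lam L t0 \<tau>0 \<tau>1 f0 \<tau> f \<and>
            (\<forall>t\<in>{0..L}. norm (vector_derivative \<tau> (at t within {0..L})) = norm \<tau>1 \<and>
                         lam \<bullet> \<tau> t \<noteq> 1 \<and> lam \<bullet> \<tau> t \<noteq> -1 \<and>
                         \<tau> t \<in> span {\<tau>0, \<tau>1, lam})) \<and>
         (\<forall>\<tau> f \<sigma> g. caratheodory_solution \<beta> lam L t0 \<tau>0 \<tau>1 f0 \<tau> f \<longrightarrow>
                    caratheodory_solution \<beta> lam L t0 \<tau>0 \<tau>1 f0 \<sigma> g \<longrightarrow>
                    (\<forall>t\<in>{0..L}. \<tau> t = \<sigma> t \<and> f t = g t))"
proof -
  obtain m M where "0 < m" "\<And>t. t \<in> {0..L} \<Longrightarrow> m \<le> \<beta> t \<and> \<beta> t \<le> M" using assms(3) by blast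
  then have "\<And>t. t \<in> {0..L} \<Longrightarrow> \<bar>\<beta> t\<bar> \<le> max M 1" by fastforce
  then interpret sphere_curve_ivp \<beta> L "max M 1" f0 t0 lam \<tau>0 \<tau>1
    using assms bounded_variation_on_borel_measurable[OF assms(2)] by unfold_locales auto
  obtain T D f where sol: "modified_solution T D f" using modified_solution_exists by blast
  have "caratheodory_solution \<beta> lam L t0 \<tau>0 \<tau>1 f0 T f" by (rule caratheodory_solution_of_modified[OF sol])
  moreover note modified_solution_properties[OF sol]
  moreover have "\<tau> t = \<sigma> t \<and> f t = g t"
    if "caratheodory_solution \<beta> lam L t0 \<tau>0 \<tau>1 f0 \<tau> f" "caratheodory_solution \<beta> lam L t0 \<tau>0 \<tau>1 f0 \<sigma> g"
      "t \<in> {0..L}" for \<tau> f \<sigma> g t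
    using modified_solution_unique[OF modified_solution_of_caratheodory[OF that(1)]
        modified_solution_of_caratheodory[OF that(2)] that(3)] by blast
  ultimately show ?thesis unfolding velocity_def by blast
qed

end
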